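(* Let $\beta$ be a Brownian bridge from $0$ to $0$ on $[0,1]$ and $c\in\mathbb R$. Define $\beta^c_t:=\beta_t+6\,t(1-t)\bigl(c-\int_0^1\beta_r\,dr\bigr)$, $t\in[0,1]$, and for $\omega\in C([0,1])$ \[ \Gamma^\omega_t:=\begin{cases}\omega_t, & t\in[0,1/3]\cup[2/3,1],\\ \omega_t+18\bigl(9\,t(1-t)-2\bigr)\Bigl(c-\int_0^1\omega_r\,dr\Bigr), & t\in[1/3,2/3],\end{cases} \] \[ \rho_1(\omega):=\sqrt{27}\,\exp\Bigl(-162\Bigl(\int_0^{1/3}(\omega_r+\omega_{1-r})\,dr+\frac{\omega_{1/3}+\omega_{2/3}}6-c\Bigr)^2+6c^2\Bigr). \] Then for all bounded Borel $\Phi:C([0,1])\to\mathbb R$, \[ \mathbb E\Bigl[\Phi(\beta)\,\Big|\,\int_0^1\beta=c\Bigr]=\mathbb E[\Phi(\beta^c)]=\mathbb E\bigl[\Phi(\Gamma^\beta)\,\rho_1(\Gamma^\beta)\bigr]. \]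
   Context: Here $\mathbb E[\Phi(\beta)\,|\,\int_0^1\beta=c]$ denotes the (Gaussian) conditional law of $\beta$ given $\int_0^1\beta_r\,dr=c$, which is the law of $\beta^c$. *)

theory Defs
  imports "HOL-Probability.Probability"
begin

text \<open>Joint Gaussianity is expressed via the characteristic function
  of every finite linear combination (allowing degenerate variance).\<close>
definition brownian_bridge :: "'a measure \<Rightarrow> (real \<Rightarrow> 'a \<Rightarrow> real) \<Rightarrow> bool" where
  "brownian_bridge M \<beta> \<longleftrightarrow>
     prob_space M \<and>
     (\<forall>t\<in>{0..1}. \<beta> t \<in> borel_measurable M) \<and>
     (\<forall>\<omega>\<in>space M. continuous_on {0..1} (\<lambda>t. \<beta> t \<omega>) \<and> \<beta> 0 \<omega> = 0 \<and> \<beta> 1 \<omega> = 0) \<and>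
     (\<forall>I a. finite I \<longrightarrow> I \<subseteq> {0..1} \<longrightarrow>
        (\<forall>u::real. char (distr M borel (\<lambda>\<omega>. \<Sum>t\<in>I. a t * \<beta> t \<omega>)) u =
           complex_of_real (exp (- (u\<^sup>2 * (\<Sum>s\<in>I. \<Sum>t\<in>I. a s * a t * (min s t - s * t))) / 2))))"

text \<open>Path space C([0,1]) is modelled by functions on [0,1] (extensional outside)
  with the cylinder sigma-algebra, whose trace on continuous paths is the Borel
  sigma-algebra of C([0,1]) with the sup norm.\<close>
abbreviation path_space :: "(real \<Rightarrow> real) measure" where
  "path_space \<equiv> PiM {0..1} (\<lambda>_. borel)"

definition bb_path :: "(real \<Rightarrow> 'a \<Rightarrow> real) \<Rightarrow> 'a \<Rightarrow> (real \<Rightarrow> real)" where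
  "bb_path \<beta> \<omega> = (\<lambda>t\<in>{0..1}. \<beta> t \<omega>)"

definition beta_c :: "real \<Rightarrow> (real \<Rightarrow> real) \<Rightarrow> (real \<Rightarrow> real)" where
  "beta_c c x = (\<lambda>t\<in>{0..1}. x t + 6 * t * (1 - t) * (c - integral {0..1} x))"

definition Gamma_c :: "real \<Rightarrow> (real \<Rightarrow> real) \<Rightarrow> (real \<Rightarrow> real)" where
  "Gamma_c c x = (\<lambda>t\<in>{0..1}. if t \<in> {1/3..2/3}
      then x t + 18 * (9 * t * (1 - t) - 2) * (c - integral {0..1} x)
      else x t)"

definition rho1 :: "real \<Rightarrow> (real \<Rightarrow> real) \<Rightarrow> real" where
  "rho1 c x = sqrt 27 * exp (- 162 * (integral {0..1/3} (\<lambda>r. x r + x (1 - r))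
       + (x (1/3) + x (2/3)) / 6 - c)\<^sup>2 + 6 * c\<^sup>2)"

end

theory Submission
  imports Defs
begin

text \<open>
  All laws involved are Gaussian, so everything is decided by characteristic functions of
  finite-dimensional marginals: a finite measure on \<open>\<real>\<^sup>I\<close> is determined by the integrals of
  \<open>iexp (\<Sum>j\<in>J. a j * x j)\<close> over finite \<open>J \<subseteq> I\<close> (Levy uniqueness plus induction on \<open>J\<close>).
  Since the hypothesis only describes point evaluations of \<open>\<beta>\<close>, functionals involving integrals
  of \<open>\<beta>\<close> are reached through Riemann sums and dominated convergence.

  The integral \<open>S = \<integral>\<beta>\<close> has variance \<open>1/12\<close> and \<open>Cov (\<beta> t, S) = t (1 - t) / 2\<close>, so
  \<open>\<beta> - 6 t (1 - t) S\<close> is independent of \<open>S\<close>. Hence \<open>(\<beta>, S)\<close> has the law of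
  \<open>(\<beta>' + 6 t (1 - t) (S'' - S'), S'')\<close> built from two independent copies, and integrating out
  \<open>S''\<close> gives the first identity.

  For the second, \<open>rho1 c (Gamma_c c \<beta>)\<close> only reads \<open>\<beta>\<close> on the outer thirds, through
  \<open>Z = \<integral>{0..1/3} (\<lambda>r. \<beta> r + \<beta> (1 - r)) + (\<beta> (1/3) + \<beta> (2/3)) / 6\<close>, which is normal with
  variance \<open>13/162\<close>; the weight turns this law into the normal law with mean \<open>26 c / 27\<close> and
  variance \<open>13/4374\<close>. Splitting a linear functional of \<open>Gamma_c c \<beta>\<close> into a multiple of \<open>Z\<close> and
  a part uncorrelated with (hence independent of) \<open>Z\<close>, its weighted characteristic function
  factorizes and agrees with that of \<open>beta_c c \<beta>\<close>.
\<close>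

section \<open>Uniqueness from characteristic functions\<close>

lemma measurable_transfer: "sets \<mu> = sets N \<Longrightarrow> f \<in> measurable N K \<Longrightarrow> f \<in> measurable \<mu> K"
  using measurable_cong_sets[of \<mu> N K K] by simp

lemma finite_measure_integrable_bounded:
  fixes f :: "'a \<Rightarrow> 'b::{banach,second_countable_topology}"
  assumes "finite_measure M" "f \<in> borel_measurable M" "\<And>x. x \<in> space M \<Longrightarrow> norm (f x) \<le> B"
  shows "integrable M f"
  by (rule finite_measure.integrable_const_bound[where B=B, OF assms(1) AE_I2[OF assms(3)] assms(2)])

lemma finite_measure_density_bounded:
  assumes "finite_measure M" "g \<in> borel_measurable M" "\<And>x. x \<in> space M \<Longrightarrow> 0 \<le> g x \<and> g x \<le> B"
  shows "finite_measure (density M (\<lambda>x. ennreal (g x)))"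
proof (rule finite_measureI)
  interpret finite_measure M by fact
  have "emeasure (density M (\<lambda>x. ennreal (g x))) (space M) = (\<integral>\<^sup>+x. ennreal (g x) * indicator (space M) x \<partial>M)"
    using assms(2) by (subst emeasure_density) auto
  also have "\<dots> \<le> (\<integral>\<^sup>+x. ennreal B \<partial>M)"
    using assms(3) by (intro nn_integral_mono) (auto simp: indicator_def intro: ennreal_leI)
  also have "\<dots> < \<infinity>" using emeasure_finite[of "space M"] by (simp add: ennreal_mult_eq_top_iff less_top[symmetric])
  finally show "emeasure (density M (\<lambda>x. ennreal (g x))) (space (density M (\<lambda>x. ennreal (g x)))) \<noteq> \<infinity>"
    by simp
qed

lemma real_distribution_normalize:
  assumes "finite_measure m" and sets: "sets m = sets borel" and pos: "measure m UNIV > 0"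
  shows "real_distribution (density m (\<lambda>_. ennreal (1 / measure m UNIV)))"
proof -
  interpret finite_measure m by fact
  have space: "space m = UNIV" using sets_eq_imp_space_eq[OF sets] by simp
  have "emeasure (density m (\<lambda>_. ennreal (1 / measure m UNIV))) (space m) = 1"
    using pos sets.top[of m] by (simp add: space emeasure_density_const emeasure_eq_measure ennreal_mult[symmetric])
  then show ?thesis
    using sets by (auto intro!: prob_spaceI simp: real_distribution_def real_distribution_axioms_def)
qed

lemma char_density_const:
  assumes "sets m = sets borel" and "0 \<le> c"
  shows "char (density m (\<lambda>_. ennreal c)) t = c *\<^sub>R (CLINT x|m. iexp (t * x))"
  unfolding char_def using assms by (subst integral_density) (auto simp: measurable_cong_sets[OF assms(1) refl])

lemma Levy_uniqueness_finite_measure: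
  fixes m1 m2 :: "real measure"
  assumes fin: "finite_measure m1" "finite_measure m2"
    and sets: "sets m1 = sets borel" "sets m2 = sets borel"
    and char_eq: "\<And>t. (CLINT x|m1. iexp (t * x)) = (CLINT x|m2. iexp (t * x))"
  shows "m1 = m2"
proof -
  have "space m1 = UNIV" "space m2 = UNIV" using sets_eq_imp_space_eq[OF sets(1)] sets_eq_imp_space_eq[OF sets(2)] by simp_all
  then have mass_eq: "measure m1 UNIV = measure m2 UNIV"
    using char_eq[of 0] by (simp add: scaleR_conv_of_real)
  define c where "c = measure m1 UNIV"
  show ?thesis
  proof (cases "c = 0")
    case True
    have null: "emeasure m A = 0" if "finite_measure m" "space m = UNIV" "measure m UNIV = 0" for m A
    proof -
      interpret finite_measure m by fact
      have "emeasure m A \<le> emeasure m (space m)" by (rule emeasure_space)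
      then show ?thesis using that by (simp add: emeasure_eq_measure)
    qed
    show ?thesis
      using True mass_eq \<open>space m1 = UNIV\<close> \<open>space m2 = UNIV\<close> sets fin
      by (intro measure_eqI) (simp_all add: null c_def)
  next
    case False
    then have c: "c > 0" by (simp add: c_def order_less_le)
    define d where "d m = density m (\<lambda>_. ennreal (1 / c))" for m :: "real measure"
    have "d m1 = d m2"
    proof (rule Levy_uniqueness)
      show "real_distribution (d m1)" "real_distribution (d m2)"
        unfolding d_def c_def using mass_eq c fin sets
        by (metis real_distribution_normalize c_def)+
      show "char (d m1) = char (d m2)"
        using c char_eq by (simp add: fun_eq_iff d_def char_density_const sets del: of_real_mult)
    qed
    moreover have "m = density (d m) (\<lambda>_. ennreal c)" if "sets m = sets borel" for m
      using c that by (simp add: d_def density_density_eq ennreal_mult[symmetric] density_1 measurable_cong_sets[OF that refl])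
    ultimately show ?thesis using sets by metis
  qed
qed

lemma integral_indicator_eq_if_weighted_char_eq:
  fixes X g :: "'a \<Rightarrow> real"
  assumes fin: "finite_measure \<mu>" "finite_measure \<nu>" and sets: "sets \<mu> = sets N" "sets \<nu> = sets N"
    and X: "X \<in> borel_measurable N" and g: "g \<in> borel_measurable N" "\<And>x. 0 \<le> g x \<and> g x \<le> B"
    and char_eq: "\<And>t. (CLINT x|\<mu>. g x *\<^sub>R iexp (t * X x)) = (CLINT x|\<nu>. g x *\<^sub>R iexp (t * X x))"
    and E: "E \<in> sets borel"
  shows "(\<integral>x. g x * indicator E (X x) \<partial>\<mu>) = (\<integral>x. g x * indicator E (X x) \<partial>\<nu>)"
proof -
  define law where "law m = distr (density m (\<lambda>x. ennreal (g x))) borel X" for m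
  have meas: "X \<in> borel_measurable (density m (\<lambda>x. ennreal (g x)))" "g \<in> borel_measurable m"
    if "sets m = sets N" for m
    using measurable_transfer[OF _ X] measurable_transfer[OF that g(1)] that by auto
  have "law \<mu> = law \<nu>"
  proof (rule Levy_uniqueness_finite_measure)
    show "finite_measure (law \<mu>)" "finite_measure (law \<nu>)"
      unfolding law_def using fin sets g(2)
      by (auto intro!: finite_measure.finite_measure_distr finite_measure_density_bounded meas)
    show "sets (law \<mu>) = sets borel" "sets (law \<nu>) = sets borel" by (simp_all add: law_def)
    have "(CLINT y|law m. iexp (t * y)) = (CLINT x|m. g x *\<^sub>R iexp (t * X x))" if "sets m = sets N" for m t
      unfolding law_def using meas[OF that] g(2)
      by (simp add: integral_distr integral_density)
    then show "(CLINT y|law \<mu>. iexp (t * y)) = (CLINT y|law \<nu>. iexp (t * y))" for t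
      using char_eq sets by simp
  qed
  moreover have "(\<integral>y. indicator E y \<partial>law m) = (\<integral>x. g x * indicator E (X x) \<partial>m)" if "sets m = sets N" for m
  proof -
    have "(\<integral>y. indicator E y \<partial>law m) = (\<integral>x. (indicator E (X x) :: real) \<partial>density m (\<lambda>x. ennreal (g x)))"
      unfolding law_def by (rule integral_distr[OF meas(1)[OF that] borel_measurable_indicator[OF E]])
    also have "\<dots> = (\<integral>x. g x * indicator E (X x) \<partial>m)"
      using meas[OF that] g(2) E by (subst integral_density) auto
    finally show ?thesis .
  qed
  ultimately show ?thesis using sets by metis
qed

lemma integral_one_plus_cos_mult_iexp:
  fixes u w :: "'a \<Rightarrow> real"
  assumes fin: "finite_measure m" and u: "u \<in> borel_measurable m" and w: "w \<in> borel_measurable m"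
  shows "(CLINT x|m. (1 + cos (w x + \<theta>)) *\<^sub>R iexp (u x)) =
    (CLINT x|m. iexp (u x)) + iexp \<theta> / 2 * (CLINT x|m. iexp (u x + w x)) + iexp (- \<theta>) / 2 * (CLINT x|m. iexp (u x - w x))"
proof -
  have int: "integrable m (\<lambda>x. c * iexp (v x))" if "v \<in> borel_measurable m" for v c
    by (rule integrable_mult_right, rule finite_measure_integrable_bounded[OF fin, where B=1]) (use that in auto)
  have "(1 + cos (w x + \<theta>)) *\<^sub>R iexp (u x) =
      1 * iexp (u x) + iexp \<theta> / 2 * iexp (u x + w x) + iexp (- \<theta>) / 2 * iexp (u x - w x)" for x
    by (simp add: scaleR_conv_of_real cos_exp_eq cos_of_real[symmetric] exp_add[symmetric] exp_diff
        algebra_simps add_divide_distrib diff_divide_distrib)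
  then have "(CLINT x|m. (1 + cos (w x + \<theta>)) *\<^sub>R iexp (u x)) =
      (CLINT x|m. 1 * iexp (u x) + iexp \<theta> / 2 * iexp (u x + w x)) + (CLINT x|m. iexp (- \<theta>) / 2 * iexp (u x - w x))"
    using int u w by (simp only: Bochner_Integration.integral_add Bochner_Integration.integrable_add borel_measurable_add borel_measurable_diff)
  also have "\<dots> = (CLINT x|m. 1 * iexp (u x)) + (CLINT x|m. iexp \<theta> / 2 * iexp (u x + w x)) + (CLINT x|m. iexp (- \<theta>) / 2 * iexp (u x - w x))"
    using int u w by (simp only: Bochner_Integration.integral_add borel_measurable_add)
  finally show ?thesis by (simp only: integral_mult_right_zero mult_1)
qed

lemma integral_cos_indicator_eq_if_char_eq:
  fixes U V :: "'a \<Rightarrow> real"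
  assumes fin: "finite_measure \<mu>" "finite_measure \<nu>" and sets: "sets \<mu> = sets N" "sets \<nu> = sets N"
    and U: "U \<in> borel_measurable N" and V: "V \<in> borel_measurable N"
    and char_eq: "\<And>t \<sigma>. (CLINT x|\<mu>. iexp (t * U x + \<sigma> * V x)) = (CLINT x|\<nu>. iexp (t * U x + \<sigma> * V x))"
    and E: "E \<in> sets borel"
  shows "(\<integral>x. cos (V x + \<theta>) * indicator E (U x) \<partial>\<mu>) = (\<integral>x. cos (V x + \<theta>) * indicator E (U x) \<partial>\<nu>)"
proof -
  have meas: "f \<in> borel_measurable m" if "sets m = sets N" "f \<in> borel_measurable N" for m and f :: "'a \<Rightarrow> real"
    using measurable_transfer that by blast
  have bounds: "0 \<le> 1 + cos (V x + \<theta>) \<and> 1 + cos (V x + \<theta>) \<le> 2" for x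
    using cos_ge_minus_one[of "V x + \<theta>"] cos_le_one[of "V x + \<theta>"] by linarith
  \<comment> \<open>The weight \<open>1 + cos (V + \<theta>)\<close> is nonnegative, and its product with \<open>iexp (t * U)\<close> is a
    combination of the joint characteristic function at \<open>(t, 0)\<close> and \<open>(t, \<plusminus>1)\<close>.\<close>
  have weighted: "(\<integral>x. (1 + cos (V x + \<theta>)) * indicator E (U x) \<partial>\<mu>) =
      (\<integral>x. (1 + cos (V x + \<theta>)) * indicator E (U x) \<partial>\<nu>)"
  proof (rule integral_indicator_eq_if_weighted_char_eq[OF fin sets U _ bounds _ E])
    show "(\<lambda>x. 1 + cos (V x + \<theta>)) \<in> borel_measurable N" using V by measurable
    have expand: "(CLINT x|m. (1 + cos (V x + \<theta>)) *\<^sub>R iexp (t * U x)) =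
        (CLINT x|m. iexp (t * U x)) + iexp \<theta> / 2 * (CLINT x|m. iexp (t * U x + V x))
        + iexp (- \<theta>) / 2 * (CLINT x|m. iexp (t * U x - V x))"
      if "finite_measure m" "sets m = sets N" for m t
      by (rule integral_one_plus_cos_mult_iexp[OF that(1)]; rule meas[OF that(2)]) (use U V in measurable)
    have "(CLINT x|\<mu>. iexp (t * U x)) = (CLINT x|\<nu>. iexp (t * U x))"
      "(CLINT x|\<mu>. iexp (t * U x + V x)) = (CLINT x|\<nu>. iexp (t * U x + V x))"
      "(CLINT x|\<mu>. iexp (t * U x - V x)) = (CLINT x|\<nu>. iexp (t * U x - V x))" for t
      using char_eq[of t 0] char_eq[of t 1] char_eq[of t "-1"] by simp_all
    then show "(CLINT x|\<mu>. (1 + cos (V x + \<theta>)) *\<^sub>R iexp (t * U x)) =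
        (CLINT x|\<nu>. (1 + cos (V x + \<theta>)) *\<^sub>R iexp (t * U x))" for t
      by (simp only: expand[OF fin(1) sets(1)] expand[OF fin(2) sets(2)])
  qed
  have mass: "(\<integral>x. 1 * indicator E (U x) \<partial>\<mu>) = ((\<integral>x. 1 * indicator E (U x) \<partial>\<nu>) :: real)"
    by (rule integral_indicator_eq_if_weighted_char_eq[OF fin sets U _ _ _ E, where B=1 and g="\<lambda>_. 1"])
      (use char_eq[of _ 0] in auto)
  have "(\<integral>x. cos (V x + \<theta>) * indicator E (U x) \<partial>m) =
      (\<integral>x. (1 + cos (V x + \<theta>)) * indicator E (U x) \<partial>m) - (\<integral>x. 1 * indicator E (U x) \<partial>m)"
    if "finite_measure m" "sets m = sets N" for m
  proof -
    have "integrable m (\<lambda>x. g x * indicator E (U x))"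
      if "g \<in> borel_measurable N" "\<And>x. \<bar>g x\<bar> \<le> 2" for g :: "'a \<Rightarrow> real"
    proof (rule finite_measure_integrable_bounded[OF \<open>finite_measure m\<close>, where B=2])
      have "(\<lambda>x. g x * indicator E (U x)) \<in> borel_measurable N" using that(1) U E by measurable
      then show "(\<lambda>x. g x * indicator E (U x)) \<in> borel_measurable m" by (rule meas[OF \<open>sets m = sets N\<close>])
      show "norm (g x * indicator E (U x)) \<le> 2" for x
        using that(2)[of x] by (simp add: abs_mult indicator_def)
    qed
    from this[of "\<lambda>x. 1 + cos (V x + \<theta>)"] this[of "\<lambda>_. 1"] show ?thesis
      using V bounds by (simp add: Bochner_Integration.integral_diff[symmetric] algebra_simps del: mult_1)
  qed
  then show ?thesis using weighted mass fin sets by simp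
qed

lemma integral_indicator_iexp_eq_if_char_eq:
  fixes U V :: "'a \<Rightarrow> real"
  assumes fin: "finite_measure \<mu>" "finite_measure \<nu>" and sets: "sets \<mu> = sets N" "sets \<nu> = sets N"
    and U: "U \<in> borel_measurable N" and V: "V \<in> borel_measurable N"
    and char_eq: "\<And>t \<sigma>. (CLINT x|\<mu>. iexp (t * U x + \<sigma> * V x)) = (CLINT x|\<nu>. iexp (t * U x + \<sigma> * V x))"
    and E: "E \<in> sets borel"
  shows "(CLINT x|\<mu>. indicator E (U x) *\<^sub>R iexp (V x)) = (CLINT x|\<nu>. indicator E (U x) *\<^sub>R iexp (V x))"
proof -
  have re_im: "(CLINT x|m. indicator E (U x) *\<^sub>R iexp (V x)) =
      of_real (\<integral>x. cos (V x + 0) * indicator E (U x) \<partial>m)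
      + \<i> * of_real (\<integral>x. cos (V x + - (pi / 2)) * indicator E (U x) \<partial>m)"
    if "finite_measure m" "sets m = sets N" for m
  proof -
    have pointwise: "indicator E (U x) *\<^sub>R iexp (V x) =
        of_real (cos (V x + 0) * indicator E (U x)) + \<i> * of_real (cos (V x + - (pi / 2)) * indicator E (U x))" for x
      by (simp add: exp_Euler cos_of_real sin_of_real cos_diff scaleR_conv_of_real algebra_simps)
    have "integrable m (\<lambda>x. of_real (cos (V x + \<theta>) * indicator E (U x)) :: complex)" for \<theta>
    proof (intro integrable_of_real finite_measure_integrable_bounded[OF that(1), where B=1])
      have "(\<lambda>x. cos (V x + \<theta>) * indicator E (U x)) \<in> borel_measurable N" using U V E by measurable
      then show "(\<lambda>x. cos (V x + \<theta>) * indicator E (U x)) \<in> borel_measurable m"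
        by (rule measurable_transfer[OF that(2)])
      show "norm (cos (V x + \<theta>) * indicator E (U x)) \<le> 1" for x
        by (simp add: abs_mult indicator_def)
    qed
    then show ?thesis
      by (simp only: pointwise Bochner_Integration.integral_add integrable_mult_right
          integral_mult_right_zero integral_complex_of_real)
  qed
  show ?thesis
    using integral_cos_indicator_eq_if_char_eq[OF assms] fin sets by (simp only: re_im)
qed

lemma char_eq_slice:
  fixes \<mu> \<nu> :: "('i \<Rightarrow> real) measure"
  assumes J: "finite J" "j \<notin> J" and fin: "finite_measure \<mu>" "finite_measure \<nu>"
    and sets: "sets \<mu> = sets (PiM (insert j J) (\<lambda>_. borel))" "sets \<nu> = sets (PiM (insert j J) (\<lambda>_. borel))"
    and char_eq: "\<And>a. (CLINT x|\<mu>. iexp (\<Sum>i\<in>insert j J. a i * x i)) = (CLINT x|\<nu>. iexp (\<Sum>i\<in>insert j J. a i * x i))"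
    and E: "E \<in> sets borel"
  shows "(CLINT x|\<mu>. indicator E (x j) *\<^sub>R iexp (\<Sum>i\<in>J. a i * x i)) =
         (CLINT x|\<nu>. indicator E (x j) *\<^sub>R iexp (\<Sum>i\<in>J. a i * x i))"
proof (rule integral_indicator_iexp_eq_if_char_eq[OF fin sets _ _ _ E])
  show "(\<lambda>x. x j) \<in> borel_measurable (PiM (insert j J) (\<lambda>_. borel))"
    "(\<lambda>x. \<Sum>i\<in>J. a i * x i) \<in> borel_measurable (PiM (insert j J) (\<lambda>_. borel))"
    by measurable
  fix t \<sigma>
  define b where "b i = (if i = j then t else \<sigma> * a i)" for i
  have "(\<Sum>i\<in>J. b i * x i) = (\<Sum>i\<in>J. \<sigma> * (a i * x i))" for x :: "'i \<Rightarrow> real"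
    using J by (intro sum.cong) (auto simp: b_def)
  then have "(\<Sum>i\<in>insert j J. b i * x i) = t * x j + \<sigma> * (\<Sum>i\<in>J. a i * x i)" for x :: "'i \<Rightarrow> real"
    using J by (simp add: b_def sum_distrib_left)
  then show "(CLINT x|\<mu>. iexp (t * x j + \<sigma> * (\<Sum>i\<in>J. a i * x i))) =
      (CLINT x|\<nu>. iexp (t * x j + \<sigma> * (\<Sum>i\<in>J. a i * x i)))"
    using char_eq[of b] by simp
qed

definition slice_measure :: "'i \<Rightarrow> 'i set \<Rightarrow> real set \<Rightarrow> ('i \<Rightarrow> real) measure \<Rightarrow> ('i \<Rightarrow> real) measure" where
  "slice_measure j J A m = distr (density m (\<lambda>x. indicator A (x j))) (PiM J (\<lambda>_. borel)) (\<lambda>x. restrict x J)"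

lemma sets_slice_measure [simp]: "sets (slice_measure j J A m) = sets (PiM J (\<lambda>_. borel))"
  by (simp add: slice_measure_def)

context
  fixes j :: 'i and J :: "'i set" and A :: "real set" and m :: "('i \<Rightarrow> real) measure"
  assumes sets_m: "sets m = sets (PiM (insert j J) (\<lambda>_. borel))" and A: "A \<in> sets borel"
begin

private lemma slice_measurable:
  "(\<lambda>x. restrict x J) \<in> measurable (density m (\<lambda>x. indicator A (x j))) (PiM J (\<lambda>_. borel))"
  "(\<lambda>x. indicator A (x j) :: ennreal) \<in> borel_measurable m"
  using A by (auto intro!: measurable_transfer[OF _ measurable_restrict_subset] measurable_transfer[OF sets_m]
      simp: sets_m)

lemma finite_measure_slice_measure:
  assumes "finite_measure m"
  shows "finite_measure (slice_measure j J A m)"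
proof -
  have "finite_measure (density m (\<lambda>x. ennreal (indicator A (x j))))"
    using A by (intro finite_measure_density_bounded[OF assms, where B=1] measurable_transfer[OF sets_m])
      (auto simp: indicator_def)
  then show ?thesis
    unfolding slice_measure_def ennreal_indicator by (rule finite_measure.finite_measure_distr[OF _ slice_measurable(1)])
qed

lemma integral_slice_measure:
  fixes f :: "('i \<Rightarrow> real) \<Rightarrow> 'b::{banach,second_countable_topology}"
  assumes f: "f \<in> borel_measurable (PiM J (\<lambda>_. borel))"
  shows "(\<integral>x. f x \<partial>slice_measure j J A m) = (\<integral>x. indicator A (x j) *\<^sub>R f (restrict x J) \<partial>m)"
proof -
  have "(\<integral>x. f x \<partial>slice_measure j J A m) = (\<integral>x. f (restrict x J) \<partial>density m (\<lambda>x. ennreal (indicator A (x j))))"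
    unfolding slice_measure_def ennreal_indicator by (rule integral_distr[OF slice_measurable(1) f])
  also have "\<dots> = (\<integral>x. indicator A (x j) *\<^sub>R f (restrict x J) \<partial>m)"
    using measurable_compose[OF slice_measurable(1) f] slice_measurable(2) A
    by (intro integral_density) (auto simp: measurable_transfer[OF sets_m])
  finally show ?thesis .
qed

lemma emeasure_slice_measure_PiE:
  assumes E: "\<And>i. i \<in> insert j J \<Longrightarrow> E i \<in> sets borel" and "A = E j" and "finite J"
  shows "emeasure (slice_measure j J A m) (Pi\<^sub>E J E) = emeasure m (Pi\<^sub>E (insert j J) E)"
proof -
  have PiE_J: "Pi\<^sub>E J E \<in> sets (PiM J (\<lambda>_. borel))" using E assms(3) by (intro sets_PiM_I_finite) auto
  have PiE: "Pi\<^sub>E (insert j J) E \<in> sets m" unfolding sets_m using E assms(3) by (intro sets_PiM_I_finite) auto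
  have space_m: "space m = space (PiM (insert j J) (\<lambda>_. borel))" using sets_eq_imp_space_eq[OF sets_m] .
  have "emeasure (slice_measure j J A m) (Pi\<^sub>E J E) =
      emeasure (density m (\<lambda>x. indicator A (x j))) ((\<lambda>x. restrict x J) -` Pi\<^sub>E J E \<inter> space m)"
    unfolding slice_measure_def by (simp add: emeasure_distr[OF slice_measurable(1) PiE_J])
  also have "\<dots> = (\<integral>\<^sup>+x. indicator A (x j) * indicator ((\<lambda>x. restrict x J) -` Pi\<^sub>E J E \<inter> space m) x \<partial>m)"
    using measurable_sets[OF slice_measurable(1) PiE_J]
    by (intro emeasure_density slice_measurable(2)) simp
  also have "\<dots> = (\<integral>\<^sup>+x. indicator (Pi\<^sub>E (insert j J) E) x \<partial>m)"
    using space_m assms(2) by (intro nn_integral_cong) (auto simp: indicator_def space_PiM PiE_iff)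
  also have "\<dots> = emeasure m (Pi\<^sub>E (insert j J) E)" using PiE by simp
  finally show ?thesis .
qed

end

lemma Levy_uniqueness_PiM_finite:
  fixes \<mu> \<nu> :: "('i \<Rightarrow> real) measure"
  assumes "finite J" "finite_measure \<mu>" "finite_measure \<nu>"
    "sets \<mu> = sets (PiM J (\<lambda>_. borel))" "sets \<nu> = sets (PiM J (\<lambda>_. borel))"
    "\<And>a. (CLINT x|\<mu>. iexp (\<Sum>j\<in>J. a j * x j)) = (CLINT x|\<nu>. iexp (\<Sum>j\<in>J. a j * x j))"
  shows "\<mu> = \<nu>"
  using assms
proof (induction J arbitrary: \<mu> \<nu> rule: finite_induct)
  case empty
  interpret \<mu>: finite_measure \<mu> by fact
  interpret \<nu>: finite_measure \<nu> by fact
  have "space \<mu> = {\<lambda>_. undefined}" "space \<nu> = {\<lambda>_. undefined}"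
    using sets_eq_imp_space_eq[OF empty(3)] sets_eq_imp_space_eq[OF empty(4)] by (simp_all add: space_PiM)
  moreover have "measure \<mu> (space \<mu>) = measure \<nu> (space \<nu>)"
    using empty(5)[of "\<lambda>_. 0"] by (simp add: scaleR_conv_of_real)
  ultimately show ?case
    using empty(3,4) \<mu>.emeasure_eq_measure \<nu>.emeasure_eq_measure space_in_prod_algebra[of "{}" "\<lambda>_. borel"]
    by (intro measure_eqI_PiM_finite[where I="{}" and M="\<lambda>_. borel" and A="\<lambda>_. \<Pi>\<^sub>E i\<in>{}. space borel"])
      (auto simp: space_PiM)
next
  case (insert j J)
  let ?P = "PiM (insert j J) (\<lambda>_. borel) :: ('i \<Rightarrow> real) measure"
  show ?case
  proof (rule measure_eqI_PiM_finite[where I="insert j J" and M="\<lambda>_. borel" and A="\<lambda>_. \<Pi>\<^sub>E i\<in>insert j J. space borel"])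
    fix E :: "'i \<Rightarrow> real set"
    assume E: "\<And>i. i \<in> insert j J \<Longrightarrow> E i \<in> sets borel"
    then have Ej: "E j \<in> sets borel" by simp
    have "slice_measure j J (E j) \<mu> = slice_measure j J (E j) \<nu>"
    proof (rule insert.IH)
      show "finite_measure (slice_measure j J (E j) \<mu>)" "finite_measure (slice_measure j J (E j) \<nu>)"
        using insert.prems E by (simp_all add: finite_measure_slice_measure)
      show "(CLINT x|slice_measure j J (E j) \<mu>. iexp (\<Sum>i\<in>J. a i * x i)) =
          (CLINT x|slice_measure j J (E j) \<nu>. iexp (\<Sum>i\<in>J. a i * x i))" for a
        using insert.prems E char_eq_slice[OF insert.hyps insert.prems Ej, of a]
        by (simp add: integral_slice_measure cong: sum.cong)
    qed simp_all
    then show "emeasure \<mu> (Pi\<^sub>E (insert j J) E) = emeasure \<nu> (Pi\<^sub>E (insert j J) E)"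
      using emeasure_slice_measure_PiE[where E=E, OF insert.prems(3) Ej E refl insert.hyps(1)]
        emeasure_slice_measure_PiE[where E=E, OF insert.prems(4) Ej E refl insert.hyps(1)]
      by simp
  qed (use insert.prems insert.hyps space_in_prod_algebra[of "insert j J" "\<lambda>_. borel"]
      finite_measure.emeasure_finite[OF insert.prems(1)] in \<open>auto simp: space_PiM\<close>)
qed

lemma Levy_uniqueness_PiM:
  fixes P Q :: "('i \<Rightarrow> real) measure"
  assumes fin_P: "finite_measure P" and fin_Q: "finite_measure Q"
    and sets_P: "sets P = sets (PiM I (\<lambda>_. borel))" and sets_Q: "sets Q = sets (PiM I (\<lambda>_. borel))"
    and char_eq: "\<And>J a. finite J \<Longrightarrow> J \<subseteq> I \<Longrightarrow>
        (CLINT x|P. iexp (\<Sum>j\<in>J. a j * x j)) = (CLINT x|Q. iexp (\<Sum>j\<in>J. a j * x j))"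
  shows "P = Q"
proof (rule measure_eqI_PiM_infinite[where I=I and M="\<lambda>_. borel"])
  show "sets P = sets (PiM I (\<lambda>_. borel))" "sets Q = sets (PiM I (\<lambda>_. borel))" by fact+
  show "finite_measure P" by fact
  fix J :: "'i set" and A :: "'i \<Rightarrow> real set" assume J: "finite J" "J \<subseteq> I" and A: "\<And>i. i \<in> J \<Longrightarrow> A i \<in> sets borel"
  let ?PJ = "PiM J (\<lambda>_. borel) :: ('i \<Rightarrow> real) measure"
  have restrict_meas: "(\<lambda>x. restrict x J) \<in> measurable (PiM I (\<lambda>_. borel)) ?PJ" by (rule measurable_restrict_subset[OF J(2)])
  define marginal where "marginal m = distr m ?PJ (\<lambda>x. restrict x J)" for m :: "('i \<Rightarrow> real) measure"
  have char_marginal: "(CLINT x|marginal m. iexp (\<Sum>j\<in>J. a j * x j)) = (CLINT x|m. iexp (\<Sum>j\<in>J. a j * x j))"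
    if sets_m: "sets m = sets (PiM I (\<lambda>_. borel))" for m a
  proof -
    have "(CLINT x|marginal m. iexp (\<Sum>j\<in>J. a j * x j)) = (CLINT x|m. iexp (\<Sum>j\<in>J. a j * restrict x J j))"
      unfolding marginal_def by (rule integral_distr[OF measurable_transfer[OF sets_m restrict_meas]]) measurable
    also have "\<dots> = (CLINT x|m. iexp (\<Sum>j\<in>J. a j * x j))" by (simp cong: sum.cong)
    finally show ?thesis .
  qed
  have "marginal P = marginal Q"
  proof (rule Levy_uniqueness_PiM_finite[OF J(1)])
    show "finite_measure (marginal P)" unfolding marginal_def by (rule finite_measure.finite_measure_distr[OF fin_P measurable_transfer[OF sets_P restrict_meas]])
    show "finite_measure (marginal Q)" unfolding marginal_def by (rule finite_measure.finite_measure_distr[OF fin_Q measurable_transfer[OF sets_Q restrict_meas]])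
    show "sets (marginal P) = sets ?PJ" "sets (marginal Q) = sets ?PJ" by (simp_all add: marginal_def)
    fix a show "(CLINT x|marginal P. iexp (\<Sum>j\<in>J. a j * x j)) = (CLINT x|marginal Q. iexp (\<Sum>j\<in>J. a j * x j))"
      unfolding char_marginal[OF sets_P] char_marginal[OF sets_Q] by (rule char_eq[OF J])
  qed
  have PiE_sets: "Pi\<^sub>E J A \<in> sets ?PJ" using A J(1) by (intro sets_PiM_I_finite) auto
  have emeasure_marginal: "emeasure (marginal m) (Pi\<^sub>E J A) = emeasure m (prod_emb I (\<lambda>_. borel) J (Pi\<^sub>E J A))"
    if sets_m: "sets m = sets (PiM I (\<lambda>_. borel))" for m
  proof -
    have "emeasure (marginal m) (Pi\<^sub>E J A) = emeasure m ((\<lambda>x. restrict x J) -` Pi\<^sub>E J A \<inter> space m)"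
      unfolding marginal_def by (rule emeasure_distr[OF measurable_transfer[OF sets_m restrict_meas] PiE_sets])
    also have "(\<lambda>x. restrict x J) -` Pi\<^sub>E J A \<inter> space m = prod_emb I (\<lambda>_. borel) J (Pi\<^sub>E J A)"
      using sets_eq_imp_space_eq[OF sets_m] by (simp add: prod_emb_def space_PiM)
    finally show ?thesis .
  qed
  show "emeasure P (prod_emb I (\<lambda>_. borel) J (Pi\<^sub>E J A)) = emeasure Q (prod_emb I (\<lambda>_. borel) J (Pi\<^sub>E J A))"
    using emeasure_marginal[OF sets_P] emeasure_marginal[OF sets_Q] \<open>marginal P = marginal Q\<close> by simp
qed

lemma char_normal_density:
  assumes s: "\<sigma> > 0"
  shows "(CLINT x|density lborel (normal_density m \<sigma>). iexp (t * x)) = iexp (t * m) * complex_of_real (exp (- ((t * \<sigma>)\<^sup>2) / 2))"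
proof -
  interpret std: prob_space std_normal_distribution using real_dist_normal_dist by (simp add: real_distribution_def)
  have D0: "distributed std_normal_distribution lborel (\<lambda>x. x) (\<lambda>x. ennreal (normal_density 0 1 x))"
    unfolding distributed_def by (simp add: distr_id2)
  have D: "distributed std_normal_distribution lborel (\<lambda>x. m + \<sigma> * x) (\<lambda>x. ennreal (normal_density (m + \<sigma> * 0) (\<bar>\<sigma>\<bar> * 1) x))"
    by (rule std.normal_density_affine[OF D0]) (use s in auto)
  then have "distr std_normal_distribution lborel (\<lambda>x. m + \<sigma> * x) = density lborel (normal_density m \<sigma>)"
    using s by (simp add: distributed_def)
  then have "(CLINT x|density lborel (normal_density m \<sigma>). iexp (t * x)) = (CLINT x|distr std_normal_distribution lborel (\<lambda>x. m + \<sigma> * x). iexp (t * x))"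
    by simp
  also have "\<dots> = (CLINT x|std_normal_distribution. iexp (t * (m + \<sigma> * x)))"
    by (rule integral_distr[OF distributed_measurable[OF D]]) measurable
  also have "\<dots> = (CLINT x|std_normal_distribution. iexp (t * m) * iexp ((t * \<sigma>) * x))"
    by (simp add: exp_add[symmetric] algebra_simps)
  also have "\<dots> = iexp (t * m) * char std_normal_distribution (t * \<sigma>)"
    unfolding char_def by simp
  also have "\<dots> = iexp (t * m) * complex_of_real (exp (- ((t * \<sigma>)\<^sup>2) / 2))"
    by (simp add: char_std_normal_distribution)
  finally show ?thesis .
qed

lemma distr_normal_if_char:
  assumes pM: "prob_space M" and X: "X \<in> borel_measurable M" and v: "v > 0"
    and ch: "\<And>u. (CLINT \<omega>|M. iexp (u * X \<omega>)) = complex_of_real (exp (- (u^2 * v) / 2))"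
  shows "distr M borel X = density lborel (normal_density 0 (sqrt v))"
proof (rule Levy_uniqueness)
  interpret prob_space M by fact
  show "real_distribution (distr M borel X)"
    by (simp add: real_distribution_def real_distribution_axioms_def prob_space_distr X)
  show "real_distribution (density lborel (normal_density 0 (sqrt v)))"
    by (rule real_distribution.intro[OF prob_space_normal_density]) (use v in \<open>simp_all add: real_distribution_axioms_def\<close>)
  show "char (distr M borel X) = char (density lborel (normal_density 0 (sqrt v)))"
  proof
    fix u
    have "char (distr M borel X) u = (CLINT \<omega>|M. iexp (u * X \<omega>))"
      unfolding char_def by (rule integral_distr[OF X]) measurable
    also have "\<dots> = complex_of_real (exp (- (u^2 * v) / 2))" by (rule ch)
    also have "\<dots> = char (density lborel (normal_density 0 (sqrt v))) u"
    proof -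
      have sv: "sqrt v > 0" using v by simp
      show ?thesis unfolding char_def char_normal_density[OF sv] using v by (simp add: power_mult_distrib)
    qed
    finally show "char (distr M borel X) u = char (density lborel (normal_density 0 (sqrt v))) u" .
  qed
qed

lemma pair_prob_space_self: "prob_space M \<Longrightarrow> pair_prob_space M M"
  by (simp add: pair_prob_space_def pair_sigma_finite_def prob_space_imp_sigma_finite)

lemma integral_pair_measure_mult:
  fixes f g :: "'a \<Rightarrow> complex"
  assumes pM: "prob_space M" and fm: "f \<in> borel_measurable M" and gm: "g \<in> borel_measurable M"
    and fb: "\<And>\<omega>. \<omega> \<in> space M \<Longrightarrow> norm (f \<omega>) \<le> B" and gb: "\<And>\<omega>. \<omega> \<in> space M \<Longrightarrow> norm (g \<omega>) \<le> B'"
  shows "(CLINT p|M \<Otimes>\<^sub>M M. f (fst p) * g (snd p)) = (CLINT \<omega>|M. f \<omega>) * (CLINT \<omega>|M. g \<omega>)"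
proof -
  interpret pp: pair_prob_space M M by (rule pair_prob_space_self[OF pM])
  have B: "0 \<le> B" using fb[of "SOME x. x \<in> space M"] pp.M1.not_empty by (metis norm_ge_zero order_trans some_in_eq)
  have int: "integrable (M \<Otimes>\<^sub>M M) (\<lambda>p. f (fst p) * g (snd p))"
  proof (rule finite_measure_integrable_bounded[where B="B * B'"])
    show "finite_measure (M \<Otimes>\<^sub>M M)" by (rule prob_space.finite_measure[OF pp.P.prob_space_axioms])
    show "(\<lambda>p. f (fst p) * g (snd p)) \<in> borel_measurable (M \<Otimes>\<^sub>M M)" using fm gm by measurable
    fix p assume "p \<in> space (M \<Otimes>\<^sub>M M)"
    then have "fst p \<in> space M" "snd p \<in> space M" by (auto simp: space_pair_measure)
    then show "norm (f (fst p) * g (snd p)) \<le> B * B'"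
      using fb gb B by (simp add: norm_mult mult_mono)
  qed
  have "(CLINT p|M \<Otimes>\<^sub>M M. f (fst p) * g (snd p)) = (CLINT x|M. CLINT y|M. f x * g y)"
    using pp.integral_fst'[OF int] by simp
  also have "\<dots> = (CLINT x|M. f x * (CLINT y|M. g y))" by simp
  also have "\<dots> = (CLINT \<omega>|M. f \<omega>) * (CLINT \<omega>|M. g \<omega>)" by simp
  finally show ?thesis .
qed

lemma distr_PiM_eqI_char:
  fixes f :: "'a \<Rightarrow> 'i \<Rightarrow> real" and g :: "'b \<Rightarrow> 'i \<Rightarrow> real"
  assumes fin: "finite_measure M" "finite_measure N"
    and f: "f \<in> measurable M (PiM I (\<lambda>_. borel))" and g: "g \<in> measurable N (PiM I (\<lambda>_. borel))"
    and char_eq: "\<And>J a. finite J \<Longrightarrow> J \<subseteq> I \<Longrightarrow>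
      (CLINT \<omega>|M. iexp (\<Sum>j\<in>J. a j * f \<omega> j)) = (CLINT \<omega>|N. iexp (\<Sum>j\<in>J. a j * g \<omega> j))"
  shows "distr M (PiM I (\<lambda>_. borel)) f = distr N (PiM I (\<lambda>_. borel)) g"
proof (rule Levy_uniqueness_PiM)
  show "finite_measure (distr M (PiM I (\<lambda>_. borel)) f)" "finite_measure (distr N (PiM I (\<lambda>_. borel)) g)"
    using fin f g by (simp_all add: finite_measure.finite_measure_distr)
  fix J :: "'i set" and a :: "'i \<Rightarrow> real"
  assume J: "finite J" "J \<subseteq> I"
  then have meas: "(\<lambda>y. iexp (\<Sum>j\<in>J. a j * y j)) \<in> borel_measurable (PiM I (\<lambda>_. borel))"
    by measurable (use J in auto)
  show "(CLINT y|distr M (PiM I (\<lambda>_. borel)) f. iexp (\<Sum>j\<in>J. a j * y j)) =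
      (CLINT y|distr N (PiM I (\<lambda>_. borel)) g. iexp (\<Sum>j\<in>J. a j * y j))"
    unfolding integral_distr[OF f meas] integral_distr[OF g meas] by (rule char_eq[OF J])
qed simp_all

lemma integral_mult_if_char_factorizes:
  fixes X Y :: "'a \<Rightarrow> real" and f g :: "real \<Rightarrow> complex"
  assumes M: "prob_space M" and X: "X \<in> borel_measurable M" and Y: "Y \<in> borel_measurable M"
    and char_factor: "\<And>s t. (CLINT \<omega>|M. iexp (s * X \<omega> + t * Y \<omega>)) =
      (CLINT \<omega>|M. iexp (s * X \<omega>)) * (CLINT \<omega>|M. iexp (t * Y \<omega>))"
    and f: "f \<in> borel_measurable borel" "\<And>x. norm (f x) \<le> B"
    and g: "g \<in> borel_measurable borel" "\<And>y. norm (g y) \<le> B'"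
  shows "(CLINT \<omega>|M. f (X \<omega>) * g (Y \<omega>)) = (CLINT \<omega>|M. f (X \<omega>)) * (CLINT \<omega>|M. g (Y \<omega>))"
proof -
  interpret pair_prob_space M M by (rule pair_prob_space_self[OF M])
  let ?P = "PiM {0, 1 :: nat} (\<lambda>_. borel) :: (nat \<Rightarrow> real) measure"
  define joint where "joint \<omega> = (\<lambda>i\<in>{0, 1 :: nat}. if i = 0 then X \<omega> else Y \<omega>)" for \<omega>
  define product where "product p = (\<lambda>i\<in>{0, 1 :: nat}. if i = 0 then X (fst p) else Y (snd p))" for p
  have joint: "joint \<in> measurable M ?P" and product: "product \<in> measurable (M \<Otimes>\<^sub>M M) ?P"
    unfolding joint_def product_def using X Y by (auto intro!: measurable_restrict)
  have law: "distr M ?P joint = distr (M \<Otimes>\<^sub>M M) ?P product"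
  proof (rule Levy_uniqueness_PiM_finite)
    show "finite_measure (distr M ?P joint)" "finite_measure (distr (M \<Otimes>\<^sub>M M) ?P product)"
      using joint product M P.prob_space_axioms
      by (simp_all add: finite_measure.finite_measure_distr prob_space.finite_measure)
    fix a :: "nat \<Rightarrow> real"
    have meas: "(\<lambda>y. iexp (\<Sum>j\<in>{0, 1}. a j * y j)) \<in> borel_measurable ?P" by measurable
    have "(CLINT y|distr (M \<Otimes>\<^sub>M M) ?P product. iexp (\<Sum>j\<in>{0, 1}. a j * y j)) =
        (CLINT p|M \<Otimes>\<^sub>M M. iexp (a 0 * X (fst p)) * iexp (a 1 * Y (snd p)))"
      unfolding integral_distr[OF product meas] by (simp add: product_def exp_add[symmetric] distrib_left)
    also have "\<dots> = (CLINT \<omega>|M. iexp (a 0 * X \<omega>)) * (CLINT \<omega>|M. iexp (a 1 * Y \<omega>))"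
      using X Y by (intro integral_pair_measure_mult[OF M, where B=1 and B'=1]) auto
    also have "\<dots> = (CLINT y|distr M ?P joint. iexp (\<Sum>j\<in>{0, 1}. a j * y j))"
      unfolding integral_distr[OF joint meas] using char_factor[of "a 0" "a 1"] by (simp add: joint_def)
    finally show "(CLINT y|distr M ?P joint. iexp (\<Sum>j\<in>{0, 1}. a j * y j)) =
        (CLINT y|distr (M \<Otimes>\<^sub>M M) ?P product. iexp (\<Sum>j\<in>{0, 1}. a j * y j))" ..
  qed simp_all
  define H where "H y = f (y 0) * g (y 1)" for y :: "nat \<Rightarrow> real"
  have H: "H \<in> borel_measurable ?P" unfolding H_def using f(1) g(1) by measurable
  have "(CLINT \<omega>|M. f (X \<omega>) * g (Y \<omega>)) = (CLINT y|distr M ?P joint. H y)"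
    unfolding integral_distr[OF joint H] by (simp add: H_def joint_def)
  also have "\<dots> = (CLINT p|M \<Otimes>\<^sub>M M. f (X (fst p)) * g (Y (snd p)))"
    unfolding law integral_distr[OF product H] by (simp add: H_def product_def)
  also have "\<dots> = (CLINT \<omega>|M. f (X \<omega>)) * (CLINT \<omega>|M. g (Y \<omega>))"
    using f g X Y by (intro integral_pair_measure_mult[OF M]) auto
  finally show ?thesis .
qed

section \<open>Riemann sums\<close>

definition riemann_sum :: "nat \<Rightarrow> real \<Rightarrow> real \<Rightarrow> (real \<Rightarrow> real) \<Rightarrow> real" where
  "riemann_sum N u v f = (v - u) / real N * (\<Sum>k=1..N. f (u + real k * (v - u) / real N))"

lemma riemann_node_mem:
  assumes "u \<le> v" "k \<le> N" "N > 0"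
  shows "u + real k * (v - u) / real N \<in> {u..v}"
proof -
  have "real k * (v - u) / real N \<le> (v - u)"
    using assms by (simp add: divide_le_eq mult_right_mono mult.commute)
  moreover have "0 \<le> real k * (v - u) / real N" using assms by simp
  ultimately show ?thesis by simp
qed

lemma integral_riemann_partition:
  fixes f :: "real \<Rightarrow> real"
  assumes uv: "u \<le> v" and int: "f integrable_on {u..v}" and N: "N > 0"
  shows "n \<le> N \<Longrightarrow> integral {u..u + real n * (v-u)/N} f =
     (\<Sum>k=1..n. integral {u + real (k-1) * (v-u)/N .. u + real k * (v-u)/N} f)"
proof (induction n)
  case 0
  then show ?case by simp
next
  case (Suc n)
  let ?x = "\<lambda>k::nat. u + real k * (v-u)/N"
  have h0: "0 \<le> (v - u) / N" using uv by simp
  have mono: "?x n \<le> ?x (Suc n)" using h0 by (simp add: add_divide_distrib distrib_right)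
  have "0 \<le> real n * (v - u) / real N" using uv by (intro divide_nonneg_nonneg mult_nonneg_nonneg) auto
  then have lo: "u \<le> ?x n" by simp
  have xs: "?x (Suc n) \<in> {u..v}" by (rule riemann_node_mem[OF uv Suc.prems N])
  have "f integrable_on {u..?x (Suc n)}" using int by (rule integrable_on_subinterval) (use xs in auto)
  then have "integral {u..?x n} f + integral {?x n..?x (Suc n)} f = integral {u..?x (Suc n)} f"
    by (rule Henstock_Kurzweil_Integration.integral_combine[OF lo mono])
  then show ?case using Suc by simp
qed

lemma right_endpoint_rule_error:
  fixes f :: "real \<Rightarrow> real"
  assumes ab: "a \<le> b" and int: "f integrable_on {a..b}" and e: "0 \<le> e"
    and close: "\<And>y. y \<in> {a..b} \<Longrightarrow> \<bar>f b - f y\<bar> \<le> e"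
  shows "\<bar>(b - a) * f b - integral {a..b} f\<bar> \<le> e * (b - a)"
proof -
  have "((\<lambda>y. f b) has_integral ((b - a) * f b)) {a..b}"
    using has_integral_const_real[of "f b" a b] ab by simp
  then have "((\<lambda>y. f b - f y) has_integral ((b - a) * f b - integral {a..b} f)) {a..b}"
    using has_integral_diff[OF _ integrable_integral[OF int]] by blast
  then have "norm ((b - a) * f b - integral {a..b} f) \<le> e * Henstock_Kurzweil_Integration.content {a..b}"
    using close by (intro has_integral_bound_real[OF e finite.emptyI]) auto
  then show ?thesis using ab by simp
qed

lemma riemann_sum_error_bound:
  fixes f :: "real \<Rightarrow> real"
  assumes uv: "u \<le> v" and int: "f integrable_on {u..v}" and N: "N > 0" and e: "e \<ge> 0"
    and close: "\<And>x y. x \<in> {u..v} \<Longrightarrow> y \<in> {u..v} \<Longrightarrow> \<bar>x - y\<bar> \<le> (v - u) / N \<Longrightarrow> \<bar>f x - f y\<bar> \<le> e"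
  shows "\<bar>riemann_sum N u v f - integral {u..v} f\<bar> \<le> e * (v - u)"
proof -
  define h where "h = (v - u) / N"
  define x where "x k = u + real k * (v - u) / N" for k :: nat
  have h: "0 \<le> h" using uv by (simp add: h_def)
  have x_step: "x k = x (k - 1) + h" if "k \<ge> 1" for k
    using that by (simp add: x_def h_def of_nat_diff add_divide_distrib left_diff_distrib diff_divide_distrib)
  have x_mem: "x k \<in> {u..v}" if "k \<le> N" for k unfolding x_def by (rule riemann_node_mem[OF uv that N])
  have integral_split: "integral {u..v} f = (\<Sum>k=1..N. integral {x (k - 1)..x k} f)"
    using integral_riemann_partition[OF uv int N order_refl] N by (simp add: x_def)
  have sum_split: "riemann_sum N u v f = (\<Sum>k=1..N. h * f (x k))"
    by (simp add: riemann_sum_def sum_distrib_left h_def x_def)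
  have piece: "\<bar>h * f (x k) - integral {x (k - 1)..x k} f\<bar> \<le> e * h" if k: "k \<in> {1..N}" for k
  proof -
    have sub: "{x (k - 1)..x k} \<subseteq> {u..v}" using x_mem[of k] x_mem[of "k - 1"] k by auto
    have "\<bar>(x k - x (k - 1)) * f (x k) - integral {x (k - 1)..x k} f\<bar> \<le> e * (x k - x (k - 1))"
    proof (rule right_endpoint_rule_error[OF _ integrable_on_subinterval[OF int sub] e])
      show "x (k - 1) \<le> x k" using x_step[of k] h k by simp
      fix y assume "y \<in> {x (k - 1)..x k}"
      then show "\<bar>f (x k) - f y\<bar> \<le> e"
        using close[of "x k" y] sub x_step[of k] k by (auto simp: h_def)
    qed
    then show ?thesis using x_step[of k] k by simp
  qed
  have "\<bar>riemann_sum N u v f - integral {u..v} f\<bar> = \<bar>\<Sum>k=1..N. (h * f (x k) - integral {x (k - 1)..x k} f)\<bar>"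
    by (simp add: sum_split integral_split sum_subtractf)
  also have "\<dots> \<le> (\<Sum>k=1..N. \<bar>h * f (x k) - integral {x (k - 1)..x k} f\<bar>)" by (rule sum_abs)
  also have "\<dots> \<le> (\<Sum>k=1..N. e * h)" by (rule sum_mono[OF piece])
  also have "\<dots> = e * (v - u)" using N by (simp add: h_def)
  finally show ?thesis .
qed

lemma riemann_sum_tendsto:
  fixes f :: "real \<Rightarrow> real"
  assumes uv: "u \<le> v" and cont: "continuous_on {u..v} f"
  shows "(\<lambda>N. riemann_sum N u v f) \<longlonglongrightarrow> integral {u..v} f"
proof (rule LIMSEQ_I)
  fix r :: real assume r: "r > 0"
  define e where "e = r / (v - u + 1)"
  have e: "e > 0" using r uv by (simp add: e_def)
  have "uniformly_continuous_on {u..v} f" by (rule compact_uniformly_continuous[OF cont compact_Icc])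
  then obtain d where d: "d > 0" and dd: "\<And>x x'. x \<in> {u..v} \<Longrightarrow> x' \<in> {u..v} \<Longrightarrow> dist x' x < d \<Longrightarrow> dist (f x') (f x) < e"
    unfolding uniformly_continuous_on_def using e by metis
  obtain n0 :: nat where n0: "(v - u) / d < real n0" using reals_Archimedean2 by blast
  have int: "f integrable_on {u..v}" using cont by (rule integrable_continuous_real)
  show "\<exists>no. \<forall>n\<ge>no. norm (riemann_sum n u v f - integral {u..v} f) < r"
  proof (intro exI allI impI)
    fix n assume n: "n \<ge> Suc n0"
    then have npos: "n > 0" by simp
    have "(v - u) / d < real n" using n0 n by linarith
    then have hd: "(v - u) / real n < d" using d npos by (simp add: divide_less_eq mult.commute)
    have "\<bar>riemann_sum n u v f - integral {u..v} f\<bar> \<le> e * (v - u)"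
    proof (rule riemann_sum_error_bound[OF uv int npos less_imp_le[OF e]])
      fix x y assume "x \<in> {u..v}" "y \<in> {u..v}" "\<bar>x - y\<bar> \<le> (v - u) / real n"
      then show "\<bar>f x - f y\<bar> \<le> e" using dd[of y x] hd by (simp add: dist_real_def)
    qed
    also have "e * (v - u) < r"
      using r uv by (simp add: e_def field_simps)
    finally show "norm (riemann_sum n u v f - integral {u..v} f) < r" by simp
  qed
qed

lemma riemann_sum_diff_bound:
  assumes uv: "u \<le> v" and B: "B \<ge> 0" and b: "\<And>x. x \<in> {u..v} \<Longrightarrow> \<bar>g1 x - g2 x\<bar> \<le> B"
  shows "\<bar>riemann_sum N u v g1 - riemann_sum N u v g2\<bar> \<le> (v - u) * B"
proof (cases "N = 0")
  case True then show ?thesis using uv B by (simp add: riemann_sum_def)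
next
  case False
  then have N: "N > 0" by simp
  have "riemann_sum N u v g1 - riemann_sum N u v g2 = (v-u)/N * (\<Sum>k=1..N. (g1 (u + real k * (v - u) / real N) - g2 (u + real k * (v - u) / real N)))"
    by (simp only: riemann_sum_def right_diff_distrib[symmetric] sum_subtractf)
  then have "\<bar>riemann_sum N u v g1 - riemann_sum N u v g2\<bar> = (v-u)/N * \<bar>\<Sum>k=1..N. (g1 (u + real k * (v - u) / real N) - g2 (u + real k * (v - u) / real N))\<bar>"
    using uv by (simp add: abs_mult)
  also have "\<dots> \<le> (v-u)/N * (\<Sum>k=1..N. B)"
    using uv
    by (intro mult_left_mono order.trans[OF sum_abs] sum_mono b riemann_node_mem[OF uv _ N]) auto
  also have "\<dots> = (v - u) * B" using N by simp
  finally show ?thesis .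
qed

section \<open>The covariance kernel of the Brownian bridge\<close>

definition bb_cov :: "real \<Rightarrow> real \<Rightarrow> real" where "bb_cov s t = min s t - s * t"

text \<open>\<open>bb_cov_int u v s\<close> is the covariance of \<open>\<beta> s\<close> with \<open>\<integral>{u..v} \<beta>\<close>, and \<open>bb_cov_int2 u v u' v'\<close>
  that of \<open>\<integral>{u..v} \<beta>\<close> with \<open>\<integral>{u'..v'} \<beta>\<close>.\<close>

definition bb_cov_int :: "real \<Rightarrow> real \<Rightarrow> real \<Rightarrow> real" where
  "bb_cov_int u v s = integral {u..v} (\<lambda>r. bb_cov s r)"

definition bb_cov_int2 :: "real \<Rightarrow> real \<Rightarrow> real \<Rightarrow> real \<Rightarrow> real" where
  "bb_cov_int2 u v u' v' = integral {u..v} (bb_cov_int u' v')"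

lemma bb_cov_sym: "bb_cov s t = bb_cov t s" by (simp add: bb_cov_def min.commute mult.commute)

lemma continuous_on_bb_cov: "continuous_on S (\<lambda>r. bb_cov s r)" unfolding bb_cov_def by (intro continuous_intros)

lemma bb_cov_lipschitz: assumes "s \<in> {0..1}" shows "\<bar>bb_cov s x - bb_cov s y\<bar> \<le> 2 * \<bar>x - y\<bar>"
proof -
  have a: "\<bar>min s x - min s y\<bar> \<le> \<bar>x - y\<bar>" by (auto simp: min_def)
  have "\<bar>s * x - s * y\<bar> = \<bar>s\<bar> * \<bar>x - y\<bar>" by (simp add: abs_mult right_diff_distrib[symmetric])
  also have "\<dots> \<le> \<bar>x - y\<bar>" using assms by (intro mult_left_le_one_le) auto
  finally have b: "\<bar>s * x - s * y\<bar> \<le> \<bar>x - y\<bar>" .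
  have c: "bb_cov s x - bb_cov s y = (min s x - min s y) - (s * x - s * y)" by (simp add: bb_cov_def)
  have "\<bar>bb_cov s x - bb_cov s y\<bar> \<le> \<bar>min s x - min s y\<bar> + \<bar>s * x - s * y\<bar>" unfolding c by (rule abs_triangle_ineq4)
  then show ?thesis using a b by linarith
qed

lemma bb_cov_int_lipschitz:
  assumes "u' \<le> v'" "s \<in> {0..1}" "s' \<in> {0..1}" "0 \<le> u'" "v' \<le> 1"
  shows "\<bar>bb_cov_int u' v' s - bb_cov_int u' v' s'\<bar> \<le> 2 * \<bar>s - s'\<bar> * (v' - u')"
proof -
  have i1: "(\<lambda>r. bb_cov s r) integrable_on {u'..v'}" by (rule integrable_continuous_real[OF continuous_on_bb_cov])
  have i2: "(\<lambda>r. bb_cov s' r) integrable_on {u'..v'}" by (rule integrable_continuous_real[OF continuous_on_bb_cov])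
  have "((\<lambda>r. bb_cov s r - bb_cov s' r) has_integral (bb_cov_int u' v' s - bb_cov_int u' v' s')) {u'..v'}"
    unfolding bb_cov_int_def by (rule has_integral_diff[OF integrable_integral[OF i1] integrable_integral[OF i2]])
  moreover have "norm (bb_cov s r - bb_cov s' r) \<le> 2 * \<bar>s - s'\<bar>" if "r \<in> {u'..v'} - {}" for r
  proof -
    have "r \<in> {0..1}" using that assms by auto
    then have "\<bar>bb_cov r s - bb_cov r s'\<bar> \<le> 2 * \<bar>s - s'\<bar>" by (rule bb_cov_lipschitz)
    then show ?thesis by (simp add: bb_cov_sym[of s r] bb_cov_sym[of s' r])
  qed
  ultimately have "norm (bb_cov_int u' v' s - bb_cov_int u' v' s') \<le> 2 * \<bar>s - s'\<bar> * Henstock_Kurzweil_Integration.content {u'..v'}"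
    by (intro has_integral_bound_real[OF _ finite.emptyI]) auto
  then show ?thesis using assms by simp
qed

lemma continuous_on_bb_cov_int:
  assumes "u' \<le> v'" "0 \<le> u'" "v' \<le> 1"
  shows "continuous_on {0..1} (bb_cov_int u' v')"
proof (rule lipschitz_on_continuous_on[OF lipschitz_onI])
  show "dist (bb_cov_int u' v' s) (bb_cov_int u' v' s') \<le> (2 * (v' - u')) * dist s s'"
    if "s \<in> {0..1}" "s' \<in> {0..1}" for s s'
    using bb_cov_int_lipschitz[OF assms(1) that assms(2,3)] by (simp add: dist_real_def algebra_simps)
  show "0 \<le> 2 * (v' - u')" using assms(1) by simp
qed

lemma riemann_sum_bb_cov_tendsto:
  assumes "u' \<le> v'"
  shows "(\<lambda>N. riemann_sum N u' v' (\<lambda>r. bb_cov s r)) \<longlonglongrightarrow> bb_cov_int u' v' s"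
  unfolding bb_cov_int_def by (rule riemann_sum_tendsto[OF assms continuous_on_bb_cov])

lemma double_riemann_sum_bb_cov_tendsto:
  assumes uv: "0 \<le> u" "u \<le> v" "v \<le> 1" and uv': "u' \<le> v'" "0 \<le> u'" "v' \<le> 1"
  shows "(\<lambda>N. riemann_sum N u v (\<lambda>s. riemann_sum N u' v' (\<lambda>r. bb_cov s r))) \<longlonglongrightarrow> bb_cov_int2 u v u' v'"
proof -
  define C where "C = (v - u) * (2 * (v' - u') * (v' - u'))"
  have bnd: "norm (riemann_sum N u v (\<lambda>s. riemann_sum N u' v' (\<lambda>r. bb_cov s r)) - riemann_sum N u v (bb_cov_int u' v')) \<le> C * inverse (real N)"
    if N: "N > 0" for N
  proof -
    have inner: "\<bar>riemann_sum N u' v' (\<lambda>r. bb_cov s r) - bb_cov_int u' v' s\<bar> \<le> 2 * (v' - u') / N * (v' - u')" if s: "s \<in> {u..v}" for s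
      unfolding bb_cov_int_def
    proof (rule riemann_sum_error_bound[OF uv'(1) integrable_continuous_real[OF continuous_on_bb_cov] N])
      show "0 \<le> 2 * (v' - u') / real N" using uv'(1) by simp
      fix x y assume h: "\<bar>x - y\<bar> \<le> (v' - u') / real N"
      have h2: "2 * \<bar>x - y\<bar> \<le> 2 * ((v' - u') / real N)" using mult_left_mono[OF h, of 2] by linarith
      have "\<bar>bb_cov s x - bb_cov s y\<bar> \<le> 2 * \<bar>x - y\<bar>" using bb_cov_lipschitz[of s x y] s uv by auto
      then have "\<bar>bb_cov s x - bb_cov s y\<bar> \<le> 2 * ((v' - u') / real N)" using h2 by linarith
      then show "\<bar>bb_cov s x - bb_cov s y\<bar> \<le> 2 * (v' - u') / real N" by simp
    qed
    have "\<bar>riemann_sum N u v (\<lambda>s. riemann_sum N u' v' (\<lambda>r. bb_cov s r)) - riemann_sum N u v (bb_cov_int u' v')\<bar> \<le> (v - u) * (2 * (v' - u') / N * (v' - u'))"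
      by (rule riemann_sum_diff_bound[OF uv(2) _ inner]) (use uv'(1) in simp)
    then show ?thesis by (simp add: C_def field_simps)
  qed
  have z: "(\<lambda>N. riemann_sum N u v (\<lambda>s. riemann_sum N u' v' (\<lambda>r. bb_cov s r)) - riemann_sum N u v (bb_cov_int u' v')) \<longlonglongrightarrow> 0"
  proof (rule Lim_null_comparison)
    show "\<forall>\<^sub>F N in sequentially. norm (riemann_sum N u v (\<lambda>s. riemann_sum N u' v' (\<lambda>r. bb_cov s r)) - riemann_sum N u v (bb_cov_int u' v')) \<le> C * inverse (real N)"
      using bnd eventually_sequentially[of "\<lambda>N. N > 0"] by (metis (mono_tags, lifting) eventually_mono eventually_gt_at_top)
    show "(\<lambda>N. C * inverse (real N)) \<longlonglongrightarrow> 0"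
      by (rule tendsto_mult_right_zero[OF lim_inverse_n])
  qed
  have r: "(\<lambda>N. riemann_sum N u v (bb_cov_int u' v')) \<longlonglongrightarrow> bb_cov_int2 u v u' v'"
    unfolding bb_cov_int2_def
    by (rule riemann_sum_tendsto[OF uv(2) continuous_on_subset[OF continuous_on_bb_cov_int[OF uv']]]) (use uv in auto)
  show ?thesis using tendsto_add[OF z r] by simp
qed

lemma double_riemann_sum_bb_cov_swap:
  "riemann_sum N u v (\<lambda>s. riemann_sum N u' v' (\<lambda>r. bb_cov s r)) = riemann_sum N u' v' (\<lambda>s. riemann_sum N u v (\<lambda>r. bb_cov s r))"
proof -
  define x where "x = (\<lambda>k::nat. u + real k * (v - u) / real N)"
  define y where "y = (\<lambda>k::nat. u' + real k * (v' - u') / real N)"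
  have sw: "(\<Sum>k=1..N. \<Sum>k'=1..N. bb_cov (x k) (y k')) = (\<Sum>k'=1..N. \<Sum>k=1..N. bb_cov (y k') (x k))"
    by (rule sum.swap[THEN trans], intro sum.cong refl, rule bb_cov_sym)
  have "riemann_sum N u v (\<lambda>s. riemann_sum N u' v' (\<lambda>r. bb_cov s r)) = (v - u) / real N * ((v' - u') / real N * (\<Sum>k=1..N. \<Sum>k'=1..N. bb_cov (x k) (y k')))"
    unfolding riemann_sum_def x_def y_def by (simp only: sum_distrib_left)
  also have "\<dots> = (v' - u') / real N * ((v - u) / real N * (\<Sum>k'=1..N. \<Sum>k=1..N. bb_cov (y k') (x k)))"
    unfolding sw by (simp only: mult.left_commute)
  also have "\<dots> = riemann_sum N u' v' (\<lambda>s. riemann_sum N u v (\<lambda>r. bb_cov s r))"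
    unfolding riemann_sum_def x_def y_def by (simp only: sum_distrib_left)
  finally show ?thesis .
qed

lemma bb_cov_int2_sym:
  assumes "0 \<le> u" "u \<le> v" "v \<le> 1" "0 \<le> u'" "u' \<le> v'" "v' \<le> 1"
  shows "bb_cov_int2 u v u' v' = bb_cov_int2 u' v' u v"
proof -
  have e: "(\<lambda>N. riemann_sum N u v (\<lambda>s. riemann_sum N u' v' (\<lambda>r. bb_cov s r))) = (\<lambda>N. riemann_sum N u' v' (\<lambda>s. riemann_sum N u v (\<lambda>r. bb_cov s r)))"
    by (rule ext, rule double_riemann_sum_bb_cov_swap)
  have "(\<lambda>N. riemann_sum N u v (\<lambda>s. riemann_sum N u' v' (\<lambda>r. bb_cov s r))) \<longlonglongrightarrow> bb_cov_int2 u' v' u v"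
    unfolding e by (rule double_riemann_sum_bb_cov_tendsto) (use assms in auto)
  then show ?thesis using double_riemann_sum_bb_cov_tendsto[of u v u' v'] assms LIMSEQ_unique by blast
qed

section \<open>Characteristic functionals of the Brownian bridge\<close>

lemma brownian_bridge_prob_space: "brownian_bridge M \<beta> \<Longrightarrow> prob_space M"
  unfolding brownian_bridge_def by blast

lemma brownian_bridge_measurable: "brownian_bridge M \<beta> \<Longrightarrow> t \<in> {0..1} \<Longrightarrow> \<beta> t \<in> borel_measurable M"
  unfolding brownian_bridge_def by blast

lemma brownian_bridge_continuous: "brownian_bridge M \<beta> \<Longrightarrow> \<omega> \<in> space M \<Longrightarrow> continuous_on {0..1} (\<lambda>t. \<beta> t \<omega>)"
  unfolding brownian_bridge_def by blast

lemma brownian_bridge_char: "brownian_bridge M \<beta> \<Longrightarrow> finite I \<Longrightarrow> I \<subseteq> {0..1} \<Longrightarrow>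
   char (distr M borel (\<lambda>\<omega>. \<Sum>t\<in>I. a t * \<beta> t \<omega>)) u =
           complex_of_real (exp (- (u\<^sup>2 * (\<Sum>s\<in>I. \<Sum>t\<in>I. a s * a t * (min s t - s * t))) / 2))"
  unfolding brownian_bridge_def by blast

lemma sum_group_by_image:
  assumes "finite A"
  shows "(\<Sum>i\<in>A. a i * g (\<tau> i)) = (\<Sum>t\<in>\<tau>`A. (\<Sum>i\<in>{i\<in>A. \<tau> i = t}. a i) * (g t :: real))"
proof -
  have "(\<Sum>i\<in>A. a i * g (\<tau> i)) = (\<Sum>t\<in>\<tau>`A. \<Sum>i\<in>{x\<in>A. \<tau> x = t}. a i * g (\<tau> i))"
    by (rule sum.image_gen[OF assms])
  also have "\<dots> = (\<Sum>t\<in>\<tau>`A. \<Sum>i\<in>{x\<in>A. \<tau> x = t}. a i * g t)" by (intro sum.cong refl) auto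
  also have "\<dots> = (\<Sum>t\<in>\<tau>`A. (\<Sum>i\<in>{i\<in>A. \<tau> i = t}. a i) * g t)" by (simp add: sum_distrib_right)
  finally show ?thesis .
qed

lemma brownian_bridge_char_points:
  fixes \<beta> :: "real \<Rightarrow> 'a \<Rightarrow> real" and \<tau> :: "'i \<Rightarrow> real"
  assumes bb: "brownian_bridge M \<beta>" and fin: "finite A" and tau: "\<And>i. i \<in> A \<Longrightarrow> \<tau> i \<in> {0..1}"
  shows "(CLINT \<omega>|M. iexp (\<Sum>i\<in>A. a i * \<beta> (\<tau> i) \<omega>)) =
    complex_of_real (exp (- (\<Sum>i\<in>A. \<Sum>j\<in>A. a i * a j * bb_cov (\<tau> i) (\<tau> j)) / 2))"
proof -
  define I where "I = \<tau> ` A"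
  define c where "c = (\<lambda>t. \<Sum>i\<in>{i\<in>A. \<tau> i = t}. a i)"
  have I: "finite I" "I \<subseteq> {0..1}" using fin tau by (auto simp: I_def)
  have F: "(\<Sum>t\<in>I. c t * \<beta> t \<omega>) = (\<Sum>i\<in>A. a i * \<beta> (\<tau> i) \<omega>)" for \<omega>
    unfolding I_def c_def by (rule sum_group_by_image[OF fin, symmetric])
  have Q: "(\<Sum>s\<in>I. \<Sum>t\<in>I. c s * c t * (min s t - s * t)) = (\<Sum>i\<in>A. \<Sum>j\<in>A. a i * a j * bb_cov (\<tau> i) (\<tau> j))"
  proof -
    have "(\<Sum>s\<in>I. \<Sum>t\<in>I. c s * c t * (min s t - s * t)) = (\<Sum>s\<in>I. c s * (\<Sum>t\<in>I. c t * bb_cov s t))"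
      by (simp add: bb_cov_def sum_distrib_left mult.assoc)
    also have "\<dots> = (\<Sum>s\<in>I. c s * (\<Sum>j\<in>A. a j * bb_cov s (\<tau> j)))"
      unfolding I_def c_def by (simp only: sum_group_by_image[OF fin, of a "\<lambda>t. bb_cov _ t", symmetric])
    also have "\<dots> = (\<Sum>i\<in>A. a i * (\<Sum>j\<in>A. a j * bb_cov (\<tau> i) (\<tau> j)))"
      unfolding I_def c_def by (rule sum_group_by_image[OF fin, symmetric])
    also have "\<dots> = (\<Sum>i\<in>A. \<Sum>j\<in>A. a i * a j * bb_cov (\<tau> i) (\<tau> j))"
      by (simp add: sum_distrib_left mult.assoc)
    finally show ?thesis .
  qed
  have mF: "(\<lambda>\<omega>. \<Sum>t\<in>I. c t * \<beta> t \<omega>) \<in> borel_measurable M"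
    using I brownian_bridge_measurable[OF bb] by (intro borel_measurable_sum borel_measurable_times borel_measurable_const) auto
  have "(CLINT \<omega>|M. iexp (\<Sum>i\<in>A. a i * \<beta> (\<tau> i) \<omega>)) = char (distr M borel (\<lambda>\<omega>. \<Sum>t\<in>I. c t * \<beta> t \<omega>)) 1"
    unfolding char_def by (subst integral_distr[OF mF]) (auto simp: F)
  also have "\<dots> = complex_of_real (exp (- (1\<^sup>2 * (\<Sum>s\<in>I. \<Sum>t\<in>I. c s * c t * (min s t - s * t))) / 2))"
    by (rule brownian_bridge_char[OF bb I])
  finally show ?thesis unfolding Q by simp
qed

lemma double_sum_Plus_symmetric:
  fixes T :: "'i + 'j \<Rightarrow> 'i + 'j \<Rightarrow> real"
  assumes "finite A" "finite C" and sym: "\<And>p q. T p q = T q p"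
  shows "(\<Sum>p\<in>A <+> C. \<Sum>q\<in>A <+> C. T p q) =
    (\<Sum>i\<in>A. \<Sum>j\<in>A. T (Inl i) (Inl j)) + 2 * (\<Sum>i\<in>A. \<Sum>c\<in>C. T (Inl i) (Inr c))
    + (\<Sum>c\<in>C. \<Sum>c'\<in>C. T (Inr c) (Inr c'))"
proof -
  have "(\<Sum>c\<in>C. \<Sum>j\<in>A. T (Inr c) (Inl j)) = (\<Sum>i\<in>A. \<Sum>c\<in>C. T (Inl i) (Inr c))"
    by (subst sum.swap) (simp add: sym)
  then show ?thesis using assms(1,2) by (simp add: sum.Plus sum.distrib o_def)
qed

lemma riemann_sum_bb_measurable:
  assumes bb: "brownian_bridge M \<beta>" and uv: "0 \<le> u" "u \<le> v" "v \<le> 1"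
  shows "(\<lambda>\<omega>. riemann_sum N u v (\<lambda>r. \<beta> r \<omega>)) \<in> borel_measurable M"
  unfolding riemann_sum_def
proof (intro borel_measurable_times borel_measurable_const borel_measurable_sum)
  fix k assume k: "k \<in> {1..N}"
  then have "u + real k * (v - u) / real N \<in> {u..v}" by (intro riemann_node_mem) (use uv in auto)
  then show "\<beta> (u + real k * (v - u) / real N) \<in> borel_measurable M" using uv by (intro brownian_bridge_measurable[OF bb]) auto
qed

lemma brownian_bridge_char_riemann:
  fixes \<beta> :: "real \<Rightarrow> 'a \<Rightarrow> real" and \<tau> :: "'i \<Rightarrow> real" and lo hi :: "'m \<Rightarrow> real"
  assumes bb: "brownian_bridge M \<beta>" and A: "finite A" "\<And>i. i \<in> A \<Longrightarrow> \<tau> i \<in> {0..1}"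
    and B: "finite B" "\<And>m. m \<in> B \<Longrightarrow> 0 \<le> lo m \<and> lo m \<le> hi m \<and> hi m \<le> 1"
  shows "(CLINT \<omega>|M. iexp ((\<Sum>i\<in>A. a i * \<beta> (\<tau> i) \<omega>) + (\<Sum>m\<in>B. b m * riemann_sum N (lo m) (hi m) (\<lambda>r. \<beta> r \<omega>)))) =
    complex_of_real (exp (- ((\<Sum>i\<in>A. \<Sum>j\<in>A. a i * a j * bb_cov (\<tau> i) (\<tau> j))
       + 2 * (\<Sum>i\<in>A. \<Sum>m\<in>B. a i * b m * riemann_sum N (lo m) (hi m) (\<lambda>r. bb_cov (\<tau> i) r))
       + (\<Sum>m\<in>B. \<Sum>m'\<in>B. b m * b m' *
            riemann_sum N (lo m) (hi m) (\<lambda>s. riemann_sum N (lo m') (hi m') (\<lambda>r. bb_cov s r)))) / 2))"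
proof -
  define C where "C = B \<times> {1..N}"
  define node where "node m k = lo m + real k * (hi m - lo m) / real N" for m k
  define h where "h m = (hi m - lo m) / real N" for m
  define \<tau>' where "\<tau>' = case_sum \<tau> (\<lambda>(m, k). node m k)"
  define a' where "a' = case_sum a (\<lambda>(m, k :: nat). b m * h m)"
  have C: "finite C" using B(1) by (simp add: C_def)
  have riemann_sum_eq: "riemann_sum N (lo m) (hi m) f = (\<Sum>k=1..N. h m * f (node m k))" for m f
    by (simp add: riemann_sum_def node_def h_def sum_distrib_left)
  have sum_C: "(\<Sum>c\<in>C. F c) = (\<Sum>m\<in>B. \<Sum>k=1..N. F (m, k))" for F :: "'m \<times> nat \<Rightarrow> real"
    by (simp add: C_def sum.cartesian_product)
  have \<tau>': "\<tau>' p \<in> {0..1}" if p: "p \<in> A <+> C" for p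
  proof (cases p)
    case (Inr c)
    then obtain m k where "c = (m, k)" "m \<in> B" "1 \<le> k" "k \<le> N" using p by (cases c) (auto simp: C_def)
    then show ?thesis
      using riemann_node_mem[of "lo m" "hi m" k N] B(2)[of m] by (force simp: \<tau>'_def node_def Inr)
  qed (use p A in \<open>auto simp: \<tau>'_def\<close>)
  have linear: "(\<Sum>p\<in>A <+> C. a' p * \<beta> (\<tau>' p) \<omega>) =
      (\<Sum>i\<in>A. a i * \<beta> (\<tau> i) \<omega>) + (\<Sum>m\<in>B. b m * riemann_sum N (lo m) (hi m) (\<lambda>r. \<beta> r \<omega>))" for \<omega>
    using A(1) C by (simp add: sum.Plus a'_def \<tau>'_def sum_C riemann_sum_eq sum_distrib_left mult.assoc)
  have quadratic: "(\<Sum>p\<in>A <+> C. \<Sum>q\<in>A <+> C. a' p * a' q * bb_cov (\<tau>' p) (\<tau>' q)) =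
      (\<Sum>i\<in>A. \<Sum>j\<in>A. a i * a j * bb_cov (\<tau> i) (\<tau> j))
       + 2 * (\<Sum>i\<in>A. \<Sum>m\<in>B. a i * b m * riemann_sum N (lo m) (hi m) (\<lambda>r. bb_cov (\<tau> i) r))
       + (\<Sum>m\<in>B. \<Sum>m'\<in>B. b m * b m' *
            riemann_sum N (lo m) (hi m) (\<lambda>s. riemann_sum N (lo m') (hi m') (\<lambda>r. bb_cov s r)))"
  proof -
    have mixed: "(\<Sum>i\<in>A. \<Sum>c\<in>C. a' (Inl i) * a' (Inr c) * bb_cov (\<tau>' (Inl i)) (\<tau>' (Inr c))) =
        (\<Sum>i\<in>A. \<Sum>m\<in>B. a i * b m * riemann_sum N (lo m) (hi m) (\<lambda>r. bb_cov (\<tau> i) r))"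
      by (simp add: a'_def \<tau>'_def sum_C riemann_sum_eq sum_distrib_left mult_ac)
    have "(\<Sum>c\<in>C. \<Sum>c'\<in>C. a' (Inr c) * a' (Inr c') * bb_cov (\<tau>' (Inr c)) (\<tau>' (Inr c'))) =
        (\<Sum>m\<in>B. \<Sum>k=1..N. \<Sum>m'\<in>B. \<Sum>k'=1..N. b m * h m * (b m' * h m') * bb_cov (node m k) (node m' k'))"
      by (simp add: a'_def \<tau>'_def sum_C)
    also have "\<dots> = (\<Sum>m\<in>B. \<Sum>m'\<in>B. \<Sum>k=1..N. \<Sum>k'=1..N. b m * h m * (b m' * h m') * bb_cov (node m k) (node m' k'))"
      by (intro sum.cong refl) (rule sum.swap)
    also have "\<dots> = (\<Sum>m\<in>B. \<Sum>m'\<in>B. b m * b m' *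
        riemann_sum N (lo m) (hi m) (\<lambda>s. riemann_sum N (lo m') (hi m') (\<lambda>r. bb_cov s r)))"
      by (simp add: riemann_sum_eq sum_distrib_left mult_ac)
    finally have pure: "(\<Sum>c\<in>C. \<Sum>c'\<in>C. a' (Inr c) * a' (Inr c') * bb_cov (\<tau>' (Inr c)) (\<tau>' (Inr c'))) =
        (\<Sum>m\<in>B. \<Sum>m'\<in>B. b m * b m' *
          riemann_sum N (lo m) (hi m) (\<lambda>s. riemann_sum N (lo m') (hi m') (\<lambda>r. bb_cov s r)))" .
    have "a' p * a' q * bb_cov (\<tau>' p) (\<tau>' q) = a' q * a' p * bb_cov (\<tau>' q) (\<tau>' p)" for p q
      by (simp add: bb_cov_sym[of "\<tau>' p" "\<tau>' q"] ac_simps)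
    then show ?thesis
      by (subst double_sum_Plus_symmetric[OF A(1) C]) (simp_all only: mixed pure, simp add: a'_def \<tau>'_def)
  qed
  have "(CLINT \<omega>|M. iexp (\<Sum>p\<in>A <+> C. a' p * \<beta> (\<tau>' p) \<omega>)) =
      complex_of_real (exp (- (\<Sum>p\<in>A <+> C. \<Sum>q\<in>A <+> C. a' p * a' q * bb_cov (\<tau>' p) (\<tau>' q)) / 2))"
    by (rule brownian_bridge_char_points[OF bb]) (use A(1) C \<tau>' in auto)
  then show ?thesis unfolding linear quadratic .
qed

lemma brownian_bridge_char_points_integrals:
  fixes \<beta> :: "real \<Rightarrow> 'a \<Rightarrow> real" and \<tau> :: "'i \<Rightarrow> real" and lo hi :: "'m \<Rightarrow> real"
  assumes bb: "brownian_bridge M \<beta>" and A: "finite A" "\<And>i. i \<in> A \<Longrightarrow> \<tau> i \<in> {0..1}"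
    and B: "finite B" "\<And>m. m \<in> B \<Longrightarrow> 0 \<le> lo m \<and> lo m \<le> hi m \<and> hi m \<le> 1"
  shows "(CLINT \<omega>|M. iexp ((\<Sum>i\<in>A. a i * \<beta> (\<tau> i) \<omega>) + (\<Sum>m\<in>B. b m * integral {lo m..hi m} (\<lambda>r. \<beta> r \<omega>)))) =
    complex_of_real (exp (- ((\<Sum>i\<in>A. \<Sum>j\<in>A. a i * a j * bb_cov (\<tau> i) (\<tau> j))
       + 2 * (\<Sum>i\<in>A. \<Sum>m\<in>B. a i * b m * bb_cov_int (lo m) (hi m) (\<tau> i))
       + (\<Sum>m\<in>B. \<Sum>m'\<in>B. b m * b m' * bb_cov_int2 (lo m) (hi m) (lo m') (hi m'))) / 2))"
    (is "(CLINT \<omega>|M. iexp (?X \<omega>)) = complex_of_real (exp (- ?Q / 2))")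
proof -
  interpret prob_space M by (rule brownian_bridge_prob_space[OF bb])
  define X_N where "X_N N \<omega> = (\<Sum>i\<in>A. a i * \<beta> (\<tau> i) \<omega>) + (\<Sum>m\<in>B. b m * riemann_sum N (lo m) (hi m) (\<lambda>r. \<beta> r \<omega>))"
    for N \<omega>
  define Q_N where "Q_N N = (\<Sum>i\<in>A. \<Sum>j\<in>A. a i * a j * bb_cov (\<tau> i) (\<tau> j))
       + 2 * (\<Sum>i\<in>A. \<Sum>m\<in>B. a i * b m * riemann_sum N (lo m) (hi m) (\<lambda>r. bb_cov (\<tau> i) r))
       + (\<Sum>m\<in>B. \<Sum>m'\<in>B. b m * b m' *
            riemann_sum N (lo m) (hi m) (\<lambda>s. riemann_sum N (lo m') (hi m') (\<lambda>r. bb_cov s r)))" for N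
  have X_N: "(\<lambda>N. X_N N \<omega>) \<longlonglongrightarrow> ?X \<omega>" if \<omega>: "\<omega> \<in> space M" for \<omega>
    unfolding X_N_def
  proof (intro tendsto_add tendsto_const tendsto_sum tendsto_mult)
    fix m assume "m \<in> B"
    then show "(\<lambda>N. riemann_sum N (lo m) (hi m) (\<lambda>r. \<beta> r \<omega>)) \<longlonglongrightarrow> integral {lo m..hi m} (\<lambda>r. \<beta> r \<omega>)"
      using B(2) by (intro riemann_sum_tendsto continuous_on_subset[OF brownian_bridge_continuous[OF bb \<omega>]]) auto
  qed
  have X_N_meas: "X_N N \<in> borel_measurable M" for N
    unfolding X_N_def using brownian_bridge_measurable[OF bb] A(2) B(2) riemann_sum_bb_measurable[OF bb]
    by (intro borel_measurable_add borel_measurable_sum borel_measurable_times borel_measurable_const) auto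
  have "(\<lambda>N. CLINT \<omega>|M. iexp (X_N N \<omega>)) \<longlonglongrightarrow> (CLINT \<omega>|M. iexp (?X \<omega>))"
  proof (rule integral_dominated_convergence[where w="\<lambda>_. 1"])
    show "(\<lambda>\<omega>. iexp (?X \<omega>)) \<in> borel_measurable M"
      using borel_measurable_LIMSEQ_real[OF X_N X_N_meas] by measurable
    show "(\<lambda>\<omega>. iexp (X_N N \<omega>)) \<in> borel_measurable M" for N using X_N_meas by measurable
    show "AE \<omega> in M. (\<lambda>N. iexp (X_N N \<omega>)) \<longlonglongrightarrow> iexp (?X \<omega>)"
      by (intro AE_I2 tendsto_intros X_N)
  qed simp_all
  moreover have limQ: "Q_N \<longlonglongrightarrow> ?Q"
    unfolding Q_N_def
  proof (intro tendsto_add tendsto_const tendsto_mult_left tendsto_sum)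
    fix i m assume "i \<in> A" "m \<in> B"
    then show "(\<lambda>N. riemann_sum N (lo m) (hi m) (\<lambda>r. bb_cov (\<tau> i) r)) \<longlonglongrightarrow> bb_cov_int (lo m) (hi m) (\<tau> i)"
      using B(2) by (intro riemann_sum_bb_cov_tendsto) simp
  next
    fix m m' assume "m \<in> B" "m' \<in> B"
    then show "(\<lambda>N. riemann_sum N (lo m) (hi m) (\<lambda>s. riemann_sum N (lo m') (hi m') (\<lambda>r. bb_cov s r)))
        \<longlonglongrightarrow> bb_cov_int2 (lo m) (hi m) (lo m') (hi m')"
      using B(2) by (intro double_riemann_sum_bb_cov_tendsto) auto
  qed
  then have "(\<lambda>N. complex_of_real (exp (- Q_N N / 2))) \<longlonglongrightarrow> complex_of_real (exp (- ?Q / 2))"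
    by (intro tendsto_intros limQ) simp
  ultimately show ?thesis
    using brownian_bridge_char_riemann[OF bb A B] by (simp add: X_N_def Q_N_def LIMSEQ_unique)
qed

lemma brownian_bridge_integral_measurable:
  assumes bb: "brownian_bridge M \<beta>" and uv: "0 \<le> u" "u \<le> v" "v \<le> 1"
  shows "(\<lambda>\<omega>. integral {u..v} (\<lambda>r. \<beta> r \<omega>)) \<in> borel_measurable M"
proof (rule borel_measurable_LIMSEQ_real[OF _ riemann_sum_bb_measurable[OF bb uv]])
  fix \<omega> assume "\<omega> \<in> space M"
  then show "(\<lambda>N. riemann_sum N u v (\<lambda>r. \<beta> r \<omega>)) \<longlonglongrightarrow> integral {u..v} (\<lambda>r. \<beta> r \<omega>)"
    by (intro riemann_sum_tendsto uv continuous_on_subset[OF brownian_bridge_continuous[OF bb]]) (use uv in auto)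
qed

lemma integral_quadratic:
  fixes a b c0 c1 c2 :: real
  assumes "a \<le> b"
  shows "integral {a..b} (\<lambda>r. c0 + c1 * r + c2 * r^2) = c0 * (b - a) + c1 * (b^2 - a^2) / 2 + c2 * (b^3 - a^3) / 3"
proof -
  define F where "F = (\<lambda>r::real. c0 * r + c1 * r^2 / 2 + c2 * r^3 / 3)"
  have d: "(F has_vector_derivative (c0 + c1 * x + c2 * x^2)) (at x within {a..b})" for x
  proof -
    have "(F has_real_derivative (c0 + c1 * x + c2 * x^2)) (at x within {a..b})"
      unfolding F_def by (auto intro!: derivative_eq_intros simp: power2_eq_square)
    then show ?thesis by (simp add: has_real_derivative_iff_has_vector_derivative)
  qed
  have "((\<lambda>r. c0 + c1 * r + c2 * r^2) has_integral (F b - F a)) {a..b}"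
    by (rule fundamental_theorem_of_calculus[OF assms]) (use d in auto)
  then show ?thesis by (simp add: integral_unique F_def algebra_simps diff_divide_distrib)
qed

lemma bb_cov_integrable: "(\<lambda>r. bb_cov s r) integrable_on {a..b}" by (rule integrable_continuous_real[OF continuous_on_bb_cov])

lemma bb_cov_int_01: assumes "t \<in> {0..1}" shows "bb_cov_int 0 1 t = t * (1 - t) / 2"
proof -
  from assms have t0: "0 \<le> t" "t \<le> 1" by auto
  have "bb_cov_int 0 1 t = integral {0..t} (\<lambda>r. bb_cov t r) + integral {t..1} (\<lambda>r. bb_cov t r)"
    unfolding bb_cov_int_def using assms by (intro Henstock_Kurzweil_Integration.integral_combine[symmetric] bb_cov_integrable) auto
  also have "integral {0..t} (\<lambda>r. bb_cov t r) = integral {0..t} (\<lambda>r. 0 + (1 - t) * r + 0 * r^2)"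
    by (intro integral_cong) (auto simp: bb_cov_def algebra_simps)
  also have "integral {t..1} (\<lambda>r. bb_cov t r) = integral {t..1} (\<lambda>r. t + (- t) * r + 0 * r^2)"
    by (intro integral_cong) (auto simp: bb_cov_def algebra_simps)
  also have "integral {0..t} (\<lambda>r. 0 + (1 - t) * r + 0 * r^2) + integral {t..1} (\<lambda>r. t + (- t) * r + 0 * r^2)
     = (0 * (t - 0) + (1 - t) * (t^2 - 0^2) / 2 + 0 * (t^3 - 0^3) / 3) + (t * (1 - t) + (- t) * (1^2 - t^2) / 2 + 0 * (1^3 - t^3) / 3)"
    by (simp only: integral_quadratic t0)
  also have "\<dots> = t * (1 - t) / 2" by (simp add: field_simps power2_eq_square)
  finally show ?thesis .
qed

lemma bb_cov_int_middle_inside: assumes "t \<in> {1/3..2/3}" shows "bb_cov_int (1/3) (2/3) t = - 1/18 + t / 2 - t^2 / 2"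
proof -
  from assms have t0: "1/3 \<le> t" "t \<le> 2/3" by auto
  have "bb_cov_int (1/3) (2/3) t = integral {1/3..t} (\<lambda>r. bb_cov t r) + integral {t..2/3} (\<lambda>r. bb_cov t r)"
    unfolding bb_cov_int_def using assms by (intro Henstock_Kurzweil_Integration.integral_combine[symmetric] bb_cov_integrable) auto
  also have "integral {1/3..t} (\<lambda>r. bb_cov t r) = integral {1/3..t} (\<lambda>r. 0 + (1 - t) * r + 0 * r^2)"
    by (intro integral_cong) (auto simp: bb_cov_def algebra_simps)
  also have "integral {t..2/3} (\<lambda>r. bb_cov t r) = integral {t..2/3} (\<lambda>r. t + (- t) * r + 0 * r^2)"
    by (intro integral_cong) (auto simp: bb_cov_def algebra_simps)
  also have "integral {1/3..t} (\<lambda>r. 0 + (1 - t) * r + 0 * r^2) + integral {t..2/3} (\<lambda>r. t + (- t) * r + 0 * r^2)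
     = (0 * (t - 1/3) + (1 - t) * (t^2 - (1/3)^2) / 2 + 0 * (t^3 - (1/3)^3) / 3) + (t * (2/3 - t) + (- t) * ((2/3)^2 - t^2) / 2 + 0 * ((2/3)^3 - t^3) / 3)"
    by (simp only: integral_quadratic t0)
  also have "\<dots> = - 1/18 + t / 2 - t^2 / 2" by (simp add: field_simps power2_eq_square power3_eq_cube)
  finally show ?thesis .
qed

lemma bb_cov_int_middle_left: assumes "t \<in> {0..1/3}" shows "bb_cov_int (1/3) (2/3) t = t / 6"
proof -
  have "bb_cov_int (1/3) (2/3) t = integral {1/3..2/3} (\<lambda>r. t + (- t) * r + 0 * r^2)"
    unfolding bb_cov_int_def using assms by (intro integral_cong) (auto simp: bb_cov_def algebra_simps)
  also have "\<dots> = t * (2/3 - 1/3) + (- t) * ((2/3)^2 - (1/3)^2) / 2 + 0 * ((2/3)^3 - (1/3)^3) / 3"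
    by (rule integral_quadratic) simp
  also have "\<dots> = t / 6" by (simp add: field_simps power2_eq_square)
  finally show ?thesis .
qed

lemma bb_cov_int_middle_right: assumes "t \<in> {2/3..1}" shows "bb_cov_int (1/3) (2/3) t = (1 - t) / 6"
proof -
  have "bb_cov_int (1/3) (2/3) t = integral {1/3..2/3} (\<lambda>r. 0 + (1 - t) * r + 0 * r^2)"
    unfolding bb_cov_int_def using assms by (intro integral_cong) (auto simp: bb_cov_def algebra_simps)
  also have "\<dots> = 0 * (2/3 - 1/3) + (1 - t) * ((2/3)^2 - (1/3)^2) / 2 + 0 * ((2/3)^3 - (1/3)^3) / 3"
    by (rule integral_quadratic) simp
  also have "\<dots> = (1 - t) / 6" by (simp add: field_simps power2_eq_square)
  finally show ?thesis .
qed

lemma bb_cov_int2_01_01: "bb_cov_int2 0 1 0 1 = 1/12"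
proof -
  have "bb_cov_int2 0 1 0 1 = integral {0..1} (\<lambda>r. 0 + (1/2) * r + (-1/2) * r^2)"
    unfolding bb_cov_int2_def by (intro integral_cong) (auto simp: bb_cov_int_01 power2_eq_square algebra_simps diff_divide_distrib)
  also have "\<dots> = 0 * (1 - 0) + (1/2) * (1^2 - 0^2) / 2 + (-1/2) * (1^3 - 0^3) / 3" by (rule integral_quadratic) simp
  finally show ?thesis by simp
qed

lemma bb_cov_int2_middle_01: "bb_cov_int2 (1/3) (2/3) 0 1 = 13/324"
proof -
  have "bb_cov_int2 (1/3) (2/3) 0 1 = integral {1/3..2/3} (\<lambda>r. 0 + (1/2) * r + (-1/2) * r^2)"
    unfolding bb_cov_int2_def by (intro integral_cong) (auto simp: bb_cov_int_01 power2_eq_square algebra_simps diff_divide_distrib)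
  also have "\<dots> = 0 * (2/3 - 1/3) + (1/2) * ((2/3)^2 - (1/3)^2) / 2 + (-1/2) * ((2/3)^3 - (1/3)^3) / 3" by (rule integral_quadratic) simp
  finally show ?thesis by (simp add: power2_eq_square power3_eq_cube)
qed

lemma bb_cov_int2_01_middle: "bb_cov_int2 0 1 (1/3) (2/3) = 13/324"
  using bb_cov_int2_sym[of 0 1 "1/3" "2/3"] bb_cov_int2_middle_01 by simp

lemma bb_cov_int2_middle_middle: "bb_cov_int2 (1/3) (2/3) (1/3) (2/3) = 7/324"
proof -
  have "bb_cov_int2 (1/3) (2/3) (1/3) (2/3) = integral {1/3..2/3} (\<lambda>r. (-1/18) + (1/2) * r + (-1/2) * r^2)"
    unfolding bb_cov_int2_def by (intro integral_cong) (auto simp: bb_cov_int_middle_inside)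
  also have "\<dots> = (-1/18) * (2/3 - 1/3) + (1/2) * ((2/3)^2 - (1/3)^2) / 2 + (-1/2) * ((2/3)^3 - (1/3)^3) / 3" by (rule integral_quadratic) simp
  finally show ?thesis by (simp add: power2_eq_square power3_eq_cube)
qed

definition bb_integral :: "(real \<Rightarrow> 'a \<Rightarrow> real) \<Rightarrow> 'a \<Rightarrow> real" where
  "bb_integral \<beta> \<omega> = integral {0..1} (\<lambda>r. \<beta> r \<omega>)"

definition bb_middle_integral :: "(real \<Rightarrow> 'a \<Rightarrow> real) \<Rightarrow> 'a \<Rightarrow> real" where
  "bb_middle_integral \<beta> \<omega> = integral {1/3..2/3} (\<lambda>r. \<beta> r \<omega>)"

text \<open>\<open>bb_Z\<close> is the functional of the outer thirds that \<open>rho1\<close> evaluates (see \<open>rho1_Gamma_c_eq\<close>),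
  written through the whole and the middle integral; \<open>cov_Z t\<close> is its covariance with \<open>\<beta> t\<close>.\<close>

definition bb_Z :: "(real \<Rightarrow> 'a \<Rightarrow> real) \<Rightarrow> 'a \<Rightarrow> real" where
  "bb_Z \<beta> \<omega> = bb_integral \<beta> \<omega> - bb_middle_integral \<beta> \<omega> + (\<beta> (1/3) \<omega> + \<beta> (2/3) \<omega>) / 6"

definition cov_Z :: "real \<Rightarrow> real" where
  "cov_Z t = bb_cov_int 0 1 t - bb_cov_int (1/3) (2/3) t + (bb_cov t (1/3) + bb_cov t (2/3)) / 6"

lemma brownian_bridge_char_joint:
  fixes \<beta> :: "real \<Rightarrow> 'a \<Rightarrow> real"
  assumes bb: "brownian_bridge M \<beta>" and J: "finite J" "J \<subseteq> {0..1}"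
  shows "(CLINT \<omega>|M. iexp ((\<Sum>t\<in>J. a t * \<beta> t \<omega>) + x * bb_integral \<beta> \<omega> + z * bb_Z \<beta> \<omega>)) =
   complex_of_real (exp (- ((\<Sum>s\<in>J. \<Sum>t\<in>J. a s * a t * bb_cov s t) + 2 * x * (\<Sum>t\<in>J. a t * bb_cov_int 0 1 t)
      + 2 * z * (\<Sum>t\<in>J. a t * cov_Z t) + x^2 / 12 + 2 * x * z * (13/162) + z^2 * (13/162)) / 2))"
proof -
  define A where "A = J <+> (UNIV :: bool set)"
  define \<tau> where "\<tau> = case_sum (\<lambda>t. t) (\<lambda>b::bool. if b then 1/3 else (2/3::real))"
  define a' where "a' = case_sum a (\<lambda>b::bool. z / 6)"
  define B where "B = {0::nat, 1}"
  define lo where "lo = (\<lambda>m::nat. if m = 0 then 0 else (1/3::real))"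
  define hi where "hi = (\<lambda>m::nat. if m = 0 then 1 else (2/3::real))"
  define b where "b = (\<lambda>m::nat. if m = 0 then x + z else - z)"
  have A_finite: "finite A" using J by (simp add: A_def)
  have \<tau>_mem: "\<tau> p \<in> {0..1}" if "p \<in> A" for p using that J by (auto simp: A_def \<tau>_def)
  have B_bounds: "0 \<le> lo m \<and> lo m \<le> hi m \<and> hi m \<le> 1" if "m \<in> B" for m using that by (auto simp: B_def lo_def hi_def)
  have char_points_integrals: "(CLINT \<omega>|M. iexp ((\<Sum>p\<in>A. a' p * \<beta> (\<tau> p) \<omega>) + (\<Sum>m\<in>B. b m * integral {lo m..hi m} (\<lambda>r. \<beta> r \<omega>)))) =
    complex_of_real (exp (- ((\<Sum>p\<in>A. \<Sum>q\<in>A. a' p * a' q * bb_cov (\<tau> p) (\<tau> q))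
       + 2 * (\<Sum>p\<in>A. \<Sum>m\<in>B. a' p * b m * bb_cov_int (lo m) (hi m) (\<tau> p))
       + (\<Sum>m\<in>B. \<Sum>m'\<in>B. b m * b m' * bb_cov_int2 (lo m) (hi m) (lo m') (hi m'))) / 2))"
    by (rule brownian_bridge_char_points_integrals[OF bb A_finite \<tau>_mem _ B_bounds]) (simp_all add: B_def)
  have functional_eq: "(\<Sum>p\<in>A. a' p * \<beta> (\<tau> p) \<omega>) + (\<Sum>m\<in>B. b m * integral {lo m..hi m} (\<lambda>r. \<beta> r \<omega>))
      = (\<Sum>t\<in>J. a t * \<beta> t \<omega>) + x * bb_integral \<beta> \<omega> + z * bb_Z \<beta> \<omega>" for \<omega>
    using J by (simp add: A_def sum.Plus UNIV_bool a'_def \<tau>_def B_def lo_def hi_def b_def bb_integral_def bb_middle_integral_def bb_Z_def algebra_simps)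
  define p where "p = (\<Sum>s\<in>J. \<Sum>t\<in>J. a s * a t * bb_cov s t)"
  define \<sigma>1 where "\<sigma>1 = (\<Sum>t\<in>J. a t * bb_cov_int 0 1 t)"
  define \<sigma>2 where "\<sigma>2 = (\<Sum>t\<in>J. a t * bb_cov_int (1/3) (2/3) t)"
  define \<sigma>3 where "\<sigma>3 = (\<Sum>t\<in>J. a t * (bb_cov t (1/3) + bb_cov t (2/3)))"
  have bb_cov_thirds: "bb_cov (1/3) (1/3) = 2/9" "bb_cov (1/3) (2/3) = 1/9" "bb_cov (2/3) (1/3) = 1/9" "bb_cov (2/3) (2/3) = 2/9"
    by (simp_all add: bb_cov_def min_def)
  have bb_cov_int_thirds: "bb_cov_int 0 1 (1/3) = 1/9" "bb_cov_int 0 1 (2/3) = 1/9" "bb_cov_int (1/3) (2/3) (1/3) = 1/18" "bb_cov_int (1/3) (2/3) (2/3) = 1/18"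
    by (simp_all add: bb_cov_int_01 bb_cov_int_middle_left bb_cov_int_middle_right)
  have point_block: "(\<Sum>p\<in>A. \<Sum>q\<in>A. a' p * a' q * bb_cov (\<tau> p) (\<tau> q)) = p + 2 * (z/6) * \<sigma>3 + z^2 / 54"
    unfolding A_def using J(1)
    by (subst double_sum_Plus_symmetric)
      (simp_all add: bb_cov_sym UNIV_bool a'_def \<tau>_def \<sigma>3_def p_def bb_cov_thirds sum_distrib_left algebra_simps power2_eq_square)
  have mixed_block: "(\<Sum>p\<in>A. \<Sum>m\<in>B. a' p * b m * bb_cov_int (lo m) (hi m) (\<tau> p))
      = (x + z) * \<sigma>1 - z * \<sigma>2 + (z/6) * ((x + z) * (2/9) - z * (1/9))"
    using J by (simp add: A_def sum.Plus UNIV_bool a'_def \<tau>_def B_def lo_def hi_def b_def bb_cov_int_thirds \<sigma>1_def \<sigma>2_def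
        sum_distrib_left sum.distrib algebra_simps sum_subtractf)
  have integral_block: "(\<Sum>m\<in>B. \<Sum>m'\<in>B. b m * b m' * bb_cov_int2 (lo m) (hi m) (lo m') (hi m'))
      = (x + z)^2 / 12 - 2 * (x + z) * z * (13/324) + z^2 * (7/324)"
    by (simp add: B_def lo_def hi_def b_def bb_cov_int2_01_01 bb_cov_int2_01_middle bb_cov_int2_middle_01 bb_cov_int2_middle_middle) (simp add: field_simps power2_eq_square)
  have sum_cov_Z: "(\<Sum>t\<in>J. a t * cov_Z t) = \<sigma>1 - \<sigma>2 + \<sigma>3 / 6"
  proof -
    have "(\<Sum>t\<in>J. a t * cov_Z t) = (\<Sum>t\<in>J. a t * bb_cov_int 0 1 t - a t * bb_cov_int (1/3) (2/3) t + (a t * (bb_cov t (1/3) + bb_cov t (2/3))) / 6)"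
      by (intro sum.cong refl) (simp add: cov_Z_def algebra_simps)
    also have "\<dots> = \<sigma>1 - \<sigma>2 + \<sigma>3 / 6"
      unfolding \<sigma>1_def \<sigma>2_def \<sigma>3_def by (simp only: sum.distrib sum_subtractf sum_divide_distrib)
    finally show ?thesis .
  qed
  have exponent_eq: "(\<Sum>p\<in>A. \<Sum>q\<in>A. a' p * a' q * bb_cov (\<tau> p) (\<tau> q))
       + 2 * (\<Sum>p\<in>A. \<Sum>m\<in>B. a' p * b m * bb_cov_int (lo m) (hi m) (\<tau> p))
       + (\<Sum>m\<in>B. \<Sum>m'\<in>B. b m * b m' * bb_cov_int2 (lo m) (hi m) (lo m') (hi m'))
     = p + 2 * x * \<sigma>1 + 2 * z * (\<Sum>t\<in>J. a t * cov_Z t) + x^2 / 12 + 2 * x * z * (13/162) + z^2 * (13/162)"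
    unfolding point_block mixed_block integral_block sum_cov_Z by (simp add: power2_eq_square field_simps)
  show ?thesis using char_points_integrals unfolding functional_eq exponent_eq p_def \<sigma>1_def by simp
qed

section \<open>Conditioning on the integral\<close>

lemma bb_integral_measurable: "brownian_bridge M \<beta> \<Longrightarrow> bb_integral \<beta> \<in> borel_measurable M"
  unfolding bb_integral_def by (rule brownian_bridge_integral_measurable) auto

lemma integral_bb_path: "integral {0..1} (bb_path \<beta> \<omega>) = bb_integral \<beta> \<omega>"
  unfolding bb_path_def bb_integral_def by (rule integral_cong) auto

lemma beta_c_bb_path: "beta_c c (bb_path \<beta> \<omega>) = (\<lambda>t\<in>{0..1}. \<beta> t \<omega> + 6 * t * (1 - t) * (c - bb_integral \<beta> \<omega>))"
  unfolding beta_c_def integral_bb_path by (rule restrict_ext) (simp add: bb_path_def)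

lemma brownian_bridge_char_with_integral:
  assumes bb: "brownian_bridge M \<beta>" and J: "finite J" "J \<subseteq> {0..1}"
  shows "(CLINT \<omega>|M. iexp ((\<Sum>t\<in>J. a t * \<beta> t \<omega>) + x * bb_integral \<beta> \<omega>)) =
    complex_of_real (exp (- ((\<Sum>s\<in>J. \<Sum>t\<in>J. a s * a t * bb_cov s t)
      + x * (\<Sum>t\<in>J. a t * (t * (1 - t))) + x^2 / 12) / 2))"
proof -
  have "(\<Sum>t\<in>J. a t * bb_cov_int 0 1 t) = (\<Sum>t\<in>J. a t * (t * (1 - t))) / 2"
    using J(2) by (auto simp: sum_divide_distrib bb_cov_int_01 intro!: sum.cong)
  then show ?thesis using brownian_bridge_char_joint[OF bb J, of a x 0] by simp
qed

text \<open>The extra time \<open>2 \<notin> {0..1}\<close> carries a number alongside a path, so that a path and its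
  integral form a single random element of \<open>PiM (insert 2 {0..1}) (\<lambda>_. borel)\<close>.\<close>

definition extend_path :: "(real \<Rightarrow> real) \<Rightarrow> real \<Rightarrow> real \<Rightarrow> real" where
  "extend_path x c = (\<lambda>t\<in>insert 2 {0..1}. if t = 2 then c else x t)"

lemma restrict_bb_path [simp]: "restrict (bb_path \<beta> \<omega>) {0..1} = bb_path \<beta> \<omega>"
  by (simp add: bb_path_def)

lemma restrict_extend_path [simp]: "restrict (extend_path x c) {0..1} = restrict x {0..1}"
  by (auto simp: extend_path_def restrict_def)

lemma extend_path_at_2 [simp]: "extend_path x c 2 = c"
  by (simp add: extend_path_def)

lemma sum_extend_path:
  assumes "finite J" "J \<subseteq> insert 2 {0..1}"
  shows "(\<Sum>t\<in>J. a t * extend_path x c t) = (\<Sum>t\<in>J - {2}. a t * x t) + (if 2 \<in> J then a 2 else 0) * c"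
proof -
  have "(\<Sum>t\<in>J - {2}. a t * extend_path x c t) = (\<Sum>t\<in>J - {2}. a t * x t)"
    using assms(2) by (intro sum.cong) (auto simp: extend_path_def)
  then show ?thesis
    using assms by (cases "2 \<in> J") (simp_all add: sum.remove[of J 2] extend_path_def)
qed

lemma measurable_extend_bb_path:
  assumes bb: "brownian_bridge M \<beta>"
  shows "(\<lambda>\<omega>. extend_path (bb_path \<beta> \<omega>) (bb_integral \<beta> \<omega>)) \<in> measurable M (PiM (insert 2 {0..1}) (\<lambda>_. borel))"
  unfolding extend_path_def bb_path_def
  using bb_integral_measurable[OF bb] brownian_bridge_measurable[OF bb]
  by (intro measurable_restrict) auto

lemma measurable_extend_beta_c:
  assumes bb: "brownian_bridge M \<beta>"
  shows "(\<lambda>(\<omega>, \<omega>'). extend_path (beta_c (bb_integral \<beta> \<omega>') (bb_path \<beta> \<omega>)) (bb_integral \<beta> \<omega>'))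
    \<in> measurable (M \<Otimes>\<^sub>M M) (PiM (insert 2 {0..1}) (\<lambda>_. borel))"
  unfolding extend_path_def beta_c_bb_path case_prod_beta
  using bb_integral_measurable[OF bb] brownian_bridge_measurable[OF bb]
  by (intro measurable_restrict) auto

lemma sum_extend_bb_path:
  assumes "finite J" "J \<subseteq> insert 2 {0..1}"
  shows "(\<Sum>t\<in>J. a t * extend_path (bb_path \<beta> \<omega>) (bb_integral \<beta> \<omega>) t) =
    (\<Sum>t\<in>J - {2}. a t * \<beta> t \<omega>) + (if 2 \<in> J then a 2 else 0) * bb_integral \<beta> \<omega>"
proof -
  have "(\<Sum>t\<in>J - {2}. a t * bb_path \<beta> \<omega> t) = (\<Sum>t\<in>J - {2}. a t * \<beta> t \<omega>)"
    using assms(2) by (intro sum.cong) (auto simp: bb_path_def)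
  then show ?thesis using assms by (simp add: sum_extend_path)
qed

lemma sum_extend_beta_c:
  fixes a :: "real \<Rightarrow> real"
  assumes "finite J" "J \<subseteq> insert 2 {0..1}"
  defines "G \<equiv> \<Sum>t\<in>J - {2}. a t * (t * (1 - t))"
  shows "(\<Sum>t\<in>J. a t * extend_path (beta_c (bb_integral \<beta> \<omega>') (bb_path \<beta> \<omega>)) (bb_integral \<beta> \<omega>') t) =
    ((\<Sum>t\<in>J - {2}. a t * \<beta> t \<omega>) + (- 6 * G) * bb_integral \<beta> \<omega>)
    + (6 * G + (if 2 \<in> J then a 2 else 0)) * bb_integral \<beta> \<omega>'"
proof -
  have "(\<Sum>t\<in>J - {2}. a t * beta_c (bb_integral \<beta> \<omega>') (bb_path \<beta> \<omega>) t) =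
      (\<Sum>t\<in>J - {2}. a t * \<beta> t \<omega> + a t * (t * (1 - t)) * (6 * (bb_integral \<beta> \<omega>' - bb_integral \<beta> \<omega>)))"
    using assms(2) by (intro sum.cong) (auto simp: beta_c_bb_path algebra_simps)
  also have "\<dots> = (\<Sum>t\<in>J - {2}. a t * \<beta> t \<omega>) + G * (6 * (bb_integral \<beta> \<omega>' - bb_integral \<beta> \<omega>))"
    by (simp only: sum.distrib sum_distrib_right[symmetric] G_def)
  finally show ?thesis using assms(1,2) by (simp add: sum_extend_path algebra_simps)
qed

lemma law_bb_integral_split:
  assumes bb: "brownian_bridge M \<beta>"
  shows "distr M (PiM (insert 2 {0..1}) (\<lambda>_. borel)) (\<lambda>\<omega>. extend_path (bb_path \<beta> \<omega>) (bb_integral \<beta> \<omega>)) =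
    distr (M \<Otimes>\<^sub>M M) (PiM (insert 2 {0..1}) (\<lambda>_. borel))
      (\<lambda>(\<omega>, \<omega>'). extend_path (beta_c (bb_integral \<beta> \<omega>') (bb_path \<beta> \<omega>)) (bb_integral \<beta> \<omega>'))"
proof (rule distr_PiM_eqI_char[OF _ _ measurable_extend_bb_path[OF bb] measurable_extend_beta_c[OF bb]])
  interpret pair_prob_space M M by (rule pair_prob_space_self[OF brownian_bridge_prob_space[OF bb]])
  show "finite_measure M" "finite_measure (M \<Otimes>\<^sub>M M)"
    by (simp_all add: M1.finite_measure_axioms P.finite_measure_axioms)
  fix J :: "real set" and a :: "real \<Rightarrow> real"
  assume J: "finite J" "J \<subseteq> insert 2 {0..1}"
  define y where "y = (if 2 \<in> J then a 2 else 0)"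
  define G where "G = (\<Sum>t\<in>J - {2}. a t * (t * (1 - t)))"
  define p where "p = (\<Sum>s\<in>J - {2}. \<Sum>t\<in>J - {2}. a s * a t * bb_cov s t)"
  define X where "X \<omega> = (\<Sum>t\<in>J - {2}. a t * \<beta> t \<omega>) + (- 6 * G) * bb_integral \<beta> \<omega>" for \<omega>
  have J': "finite (J - {2})" "J - {2} \<subseteq> {0..1}" using J by auto
  have char: "(CLINT \<omega>|M. iexp ((\<Sum>t\<in>J - {2}. a t * \<beta> t \<omega>) + x * bb_integral \<beta> \<omega>)) =
      complex_of_real (exp (- (p + x * G + x^2 / 12) / 2))" for x
    unfolding p_def G_def by (rule brownian_bridge_char_with_integral[OF bb J'])
  have char_integral: "(CLINT \<omega>|M. iexp (x * bb_integral \<beta> \<omega>)) = complex_of_real (exp (- (x^2 / 12) / 2))" for x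
    using brownian_bridge_char_with_integral[OF bb, of "{}"] by simp
  have X: "X \<in> borel_measurable M"
    unfolding X_def using J' bb_integral_measurable[OF bb] brownian_bridge_measurable[OF bb]
    by (intro borel_measurable_add borel_measurable_sum borel_measurable_times borel_measurable_const) auto
  have "(CLINT \<omega>|M. iexp (\<Sum>t\<in>J. a t * extend_path (bb_path \<beta> \<omega>) (bb_integral \<beta> \<omega>) t)) =
      complex_of_real (exp (- (p + y * G + y^2 / 12) / 2))"
    unfolding sum_extend_bb_path[OF J] y_def[symmetric] by (rule char)
  \<comment> \<open>\<open>\<integral>\<beta>\<close> has variance \<open>1/12\<close> and covariance \<open>t (1 - t) / 2\<close> with \<open>\<beta> t\<close>, so \<open>6 G\<close> is exactly the
    coefficient that decorrelates \<open>\<Sum> a t \<beta> t\<close> from \<open>\<integral>\<beta>\<close>.\<close>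
  also have "\<dots> = complex_of_real (exp (- (p + (- 6 * G) * G + (- 6 * G)^2 / 12) / 2)) *
      complex_of_real (exp (- ((6 * G + y)^2 / 12) / 2))"
    unfolding of_real_mult[symmetric] exp_add[symmetric]
    by (rule arg_cong[where f="\<lambda>u. complex_of_real (exp u)"]) (simp add: field_simps power2_eq_square)
  also have "\<dots> = (CLINT \<omega>|M. iexp (X \<omega>)) * (CLINT \<omega>|M. iexp ((6 * G + y) * bb_integral \<beta> \<omega>))"
    unfolding X_def char char_integral ..
  also have "\<dots> = (CLINT q|M \<Otimes>\<^sub>M M. iexp (X (fst q)) * iexp ((6 * G + y) * bb_integral \<beta> (snd q)))"
    using X bb_integral_measurable[OF bb]
    by (intro integral_pair_measure_mult[symmetric, OF M1.prob_space_axioms, where B=1 and B'=1]) auto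
  also have "\<dots> = (CLINT q|M \<Otimes>\<^sub>M M. iexp (\<Sum>t\<in>J. a t *
      (case q of (\<omega>, \<omega>') \<Rightarrow> extend_path (beta_c (bb_integral \<beta> \<omega>') (bb_path \<beta> \<omega>)) (bb_integral \<beta> \<omega>')) t))"
  proof (intro Bochner_Integration.integral_cong refl)
    fix q :: "'a \<times> 'a"
    obtain \<omega> \<omega>' where q: "q = (\<omega>, \<omega>')" by (cases q)
    show "iexp (X (fst q)) * iexp ((6 * G + y) * bb_integral \<beta> (snd q)) = iexp (\<Sum>t\<in>J. a t *
        (case q of (\<omega>, \<omega>') \<Rightarrow> extend_path (beta_c (bb_integral \<beta> \<omega>') (bb_path \<beta> \<omega>)) (bb_integral \<beta> \<omega>')) t)"
      unfolding q prod.case fst_conv snd_conv sum_extend_beta_c[OF J] X_def y_def[symmetric] G_def[symmetric]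
      by (simp only: of_real_add distrib_left exp_add)
  qed
  finally show "(CLINT \<omega>|M. iexp (\<Sum>t\<in>J. a t * extend_path (bb_path \<beta> \<omega>) (bb_integral \<beta> \<omega>) t)) =
      (CLINT q|M \<Otimes>\<^sub>M M. iexp (\<Sum>t\<in>J. a t *
        (case q of (\<omega>, \<omega>') \<Rightarrow> extend_path (beta_c (bb_integral \<beta> \<omega>') (bb_path \<beta> \<omega>)) (bb_integral \<beta> \<omega>')) t))" .
qed

lemma distr_bb_integral:
  assumes bb: "brownian_bridge M \<beta>"
  shows "distr M borel (bb_integral \<beta>) = density lborel (normal_density 0 (sqrt (1/12)))"
  using brownian_bridge_char_with_integral[OF bb, of "{}"]
  by (intro distr_normal_if_char[OF brownian_bridge_prob_space[OF bb] bb_integral_measurable[OF bb]])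
    (simp_all add: field_simps)

lemma measurable_beta_c_bb_path:
  assumes bb: "brownian_bridge M \<beta>"
  shows "(\<lambda>(c, \<omega>). beta_c c (bb_path \<beta> \<omega>)) \<in> measurable (borel \<Otimes>\<^sub>M M) path_space"
  unfolding beta_c_bb_path case_prod_beta using bb_integral_measurable[OF bb] brownian_bridge_measurable[OF bb]
  by (intro measurable_restrict) auto

lemma measurable_restrict_times_indicator:
  fixes \<Phi> :: "(real \<Rightarrow> real) \<Rightarrow> real"
  assumes \<Phi>: "\<Phi> \<in> borel_measurable path_space" and A: "A \<in> sets borel"
  shows "(\<lambda>y. \<Phi> (restrict y {0..1}) * indicator A (y 2)) \<in> borel_measurable (PiM (insert 2 {0..1}) (\<lambda>_. borel))"
proof -
  have "(\<lambda>y. restrict y {0..1}) \<in> measurable (PiM (insert 2 {0..1}) (\<lambda>_. borel)) path_space"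
    by (rule measurable_restrict_subset) auto
  moreover have "(\<lambda>y. y 2) \<in> measurable (PiM (insert 2 {0..1}) (\<lambda>_. borel)) borel"
    by (rule measurable_component_singleton) simp
  ultimately show ?thesis using \<Phi> A by measurable
qed

lemma conditional_law_bb_integral:
  fixes \<Phi> :: "(real \<Rightarrow> real) \<Rightarrow> real"
  assumes bb: "brownian_bridge M \<beta>" and \<Phi>: "\<Phi> \<in> borel_measurable path_space" "\<And>x. \<bar>\<Phi> x\<bar> \<le> B"
    and A: "A \<in> sets borel"
  shows "(\<integral>\<omega>. \<Phi> (bb_path \<beta> \<omega>) * indicator A (integral {0..1} (bb_path \<beta> \<omega>)) \<partial>M) =
    (\<integral>c'. indicator A c' * (\<integral>\<omega>. \<Phi> (beta_c c' (bb_path \<beta> \<omega>)) \<partial>M) \<partial>density lborel (normal_density 0 (sqrt (1/12))))"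
proof -
  interpret pair_prob_space M M by (rule pair_prob_space_self[OF brownian_bridge_prob_space[OF bb]])
  let ?P = "PiM (insert 2 {0..1}) (\<lambda>_. borel) :: (real \<Rightarrow> real) measure"
  let ?S = "bb_integral \<beta>"
  have S: "?S \<in> borel_measurable M" by (rule bb_integral_measurable[OF bb])
  define \<Psi> where "\<Psi> y = \<Phi> (restrict y {0..1}) * indicator A (y 2)" for y :: "real \<Rightarrow> real"
  have \<Psi>: "\<Psi> \<in> borel_measurable ?P"
    unfolding \<Psi>_def by (rule measurable_restrict_times_indicator[OF \<Phi>(1) A])
  define H where "H c' \<omega> = \<Phi> (beta_c c' (bb_path \<beta> \<omega>))" for c' \<omega>
  have H: "(\<lambda>(c', \<omega>). H c' \<omega>) \<in> borel_measurable (borel \<Otimes>\<^sub>M M)"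
    using measurable_compose[OF measurable_beta_c_bb_path[OF bb] \<Phi>(1)] by (simp add: H_def case_prod_beta')
  have "(\<integral>\<omega>. \<Phi> (bb_path \<beta> \<omega>) * indicator A (integral {0..1} (bb_path \<beta> \<omega>)) \<partial>M) =
      (\<integral>\<omega>. \<Psi> (extend_path (bb_path \<beta> \<omega>) (?S \<omega>)) \<partial>M)"
    by (simp add: \<Psi>_def integral_bb_path)
  also have "\<dots> = (\<integral>q. \<Psi> (case q of (\<omega>, \<omega>') \<Rightarrow> extend_path (beta_c (?S \<omega>') (bb_path \<beta> \<omega>)) (?S \<omega>')) \<partial>(M \<Otimes>\<^sub>M M))"
    using integral_distr[OF measurable_extend_bb_path[OF bb] \<Psi>]
      integral_distr[OF measurable_extend_beta_c[OF bb] \<Psi>] law_bb_integral_split[OF bb]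
    by simp
  also have "\<dots> = (\<integral>(\<omega>, \<omega>'). H (?S \<omega>') \<omega> * indicator A (?S \<omega>') \<partial>(M \<Otimes>\<^sub>M M))"
    by (intro Bochner_Integration.integral_cong)
      (auto simp: \<Psi>_def H_def beta_c_def split: prod.split)
  also have "\<dots> = (\<integral>\<omega>'. (\<integral>\<omega>. H (?S \<omega>') \<omega> \<partial>M) * indicator A (?S \<omega>') \<partial>M)"
  proof -
    have B_nonneg: "0 \<le> B" using \<Phi>(2)[of undefined] by linarith
    have "integrable (M \<Otimes>\<^sub>M M) (\<lambda>(\<omega>, \<omega>'). H (?S \<omega>') \<omega> * indicator A (?S \<omega>'))"
    proof (rule finite_measure_integrable_bounded[OF P.finite_measure_axioms, where B=B])
      have "(\<lambda>q. H (?S (snd q)) (fst q)) \<in> borel_measurable (M \<Otimes>\<^sub>M M)"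
        using measurable_compose[OF _ H, of "\<lambda>q. (?S (snd q), fst q)"] S by (simp add: case_prod_beta')
      then show "(\<lambda>(\<omega>, \<omega>'). H (?S \<omega>') \<omega> * indicator A (?S \<omega>')) \<in> borel_measurable (M \<Otimes>\<^sub>M M)"
        using S A by (simp add: case_prod_beta')
      show "norm (case q of (\<omega>, \<omega>') \<Rightarrow> H (?S \<omega>') \<omega> * indicator A (?S \<omega>')) \<le> B" for q
        using \<Phi>(2) B_nonneg by (cases q) (auto simp: H_def indicator_def)
    qed
    then show ?thesis by (simp add: integral_snd[symmetric])
  qed
  also have "\<dots> = (\<integral>c'. (\<integral>\<omega>. H c' \<omega> \<partial>M) * indicator A c' \<partial>distr M borel ?S)"
    using M1.borel_measurable_lebesgue_integral[OF H] A S by (simp add: integral_distr)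
  finally show ?thesis
    by (simp add: distr_bb_integral[OF bb] H_def mult.commute)
qed

section \<open>The density \<open>rho1\<close>\<close>

definition Gamma_profile :: "real \<Rightarrow> real" where
  "Gamma_profile t = (if t \<in> {1/3..2/3} then 18 * (9 * t * (1 - t) - 2) else 0)"

lemma Gamma_c_bb_path:
  "Gamma_c c (bb_path \<beta> \<omega>) = (\<lambda>t\<in>{0..1}. \<beta> t \<omega> + Gamma_profile t * (c - bb_integral \<beta> \<omega>))"
  unfolding Gamma_c_def integral_bb_path by (rule restrict_ext) (simp add: bb_path_def Gamma_profile_def)

lemma cov_Z_eq:
  assumes t: "t \<in> {0..1}"
  shows "cov_Z t = t * (1 - t) / 2 - Gamma_profile t / 324"
proof -
  consider "t < 1/3" | "1/3 \<le> t \<and> t \<le> 2/3" | "2/3 < t" by linarith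
  then show ?thesis
  proof cases
    case 1
    then have k: "bb_cov_int (1/3) (2/3) t = t / 6" using t by (intro bb_cov_int_middle_left) auto
    have "bb_cov t (1/3) = 2 * t / 3" "bb_cov t (2/3) = t / 3" using 1 by (auto simp: bb_cov_def min_def)
    then show ?thesis using 1 t unfolding cov_Z_def k by (auto simp: Gamma_profile_def bb_cov_int_01 field_simps)
  next
    case 2
    then have k: "bb_cov_int (1/3) (2/3) t = - 1/18 + t / 2 - t^2 / 2" by (intro bb_cov_int_middle_inside) auto
    have "bb_cov t (1/3) = 1/3 - t / 3" "bb_cov t (2/3) = t / 3" using 2 by (auto simp: bb_cov_def min_def)
    then show ?thesis using 2 t unfolding cov_Z_def k by (auto simp: Gamma_profile_def bb_cov_int_01 field_simps power2_eq_square)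
  next
    case 3
    then have k: "bb_cov_int (1/3) (2/3) t = (1 - t) / 6" using t by (intro bb_cov_int_middle_right) auto
    have "bb_cov t (1/3) = 1/3 - t / 3" "bb_cov t (2/3) = 2/3 - 2 * t / 3" using 3 by (auto simp: bb_cov_def min_def)
    then show ?thesis using 3 t unfolding cov_Z_def k by (auto simp: Gamma_profile_def bb_cov_int_01 field_simps)
  qed
qed

lemma has_integral_reflect_one_minus:
  fixes f :: "real \<Rightarrow> real"
  assumes "(f has_integral I) {1 - b..1 - a}"
  shows "((\<lambda>r. f (1 - r)) has_integral I) {a..b}"
proof -
  have "((f \<circ> (+) 1) has_integral I) {- b..- a}"
    using assms by (simp add: has_integral_shift_Icc_real)
  then have "((\<lambda>r. (f \<circ> (+) 1) (- r)) has_integral I) {- (- a)..- (- b)}"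
    by (subst has_integral_reflect_real) simp
  then show ?thesis by (simp add: o_def)
qed

lemma integral_outer_thirds:
  fixes f :: "real \<Rightarrow> real"
  assumes "continuous_on {0..1} f"
  shows "integral {0..1/3} (\<lambda>r. f r + f (1 - r)) = integral {0..1} f - integral {1/3..2/3} f"
proof -
  have int: "f integrable_on {u..v}" if "0 \<le> u" "v \<le> 1" for u v
    using that by (intro integrable_continuous_real continuous_on_subset[OF assms]) auto
  have "((\<lambda>r. f (1 - r)) has_integral integral {2/3..1} f) {0..1/3}"
    using int[of "2/3" 1] by (intro has_integral_reflect_one_minus) (simp add: has_integral_integral)
  then have "integral {0..1/3} (\<lambda>r. f r + f (1 - r)) = integral {0..1/3} f + integral {2/3..1} f"
    using int[of 0 "1/3"] by (simp add: integral_add integral_unique has_integral_integrable)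
  moreover have "integral {0..1/3} f + integral {1/3..1} f = integral {0..1} f"
    using int by (intro Henstock_Kurzweil_Integration.integral_combine) auto
  moreover have "integral {1/3..2/3} f + integral {2/3..1} f = integral {1/3..1} f"
    using int by (intro Henstock_Kurzweil_Integration.integral_combine) auto
  ultimately show ?thesis by simp
qed

lemma rho1_Gamma_c_eq:
  assumes bb: "brownian_bridge M \<beta>" and \<omega>: "\<omega> \<in> space M"
  shows "rho1 c (Gamma_c c (bb_path \<beta> \<omega>)) = sqrt 27 * exp (- 162 * (bb_Z \<beta> \<omega> - c)^2 + 6 * c^2)"
proof -
  have outer: "Gamma_c c (bb_path \<beta> \<omega>) r = \<beta> r \<omega>" if r: "r \<in> {0..1/3} \<union> {2/3..1}" for r
  proof -
    consider "r = 1/3" | "r = 2/3" | "r \<notin> {1/3..2/3}" using r by force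
    then have "Gamma_profile r = 0"
      by cases (simp_all only: Gamma_profile_def, simp_all)
    then show ?thesis using r by (auto simp: Gamma_c_bb_path)
  qed
  have "integral {0..1/3} (\<lambda>r. Gamma_c c (bb_path \<beta> \<omega>) r + Gamma_c c (bb_path \<beta> \<omega>) (1 - r)) =
      integral {0..1/3} (\<lambda>r. \<beta> r \<omega> + \<beta> (1 - r) \<omega>)"
    by (intro integral_cong) (simp add: outer)
  also have "\<dots> = bb_integral \<beta> \<omega> - bb_middle_integral \<beta> \<omega>"
    unfolding bb_integral_def bb_middle_integral_def
    by (rule integral_outer_thirds[OF brownian_bridge_continuous[OF bb \<omega>]])
  finally show ?thesis
    using outer[of "1/3"] outer[of "2/3"] by (simp add: rho1_def bb_Z_def)
qed

lemma bb_Z_measurable: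
  assumes bb: "brownian_bridge M \<beta>"
  shows "bb_Z \<beta> \<in> borel_measurable M"
proof -
  have "bb_middle_integral \<beta> \<in> borel_measurable M"
    unfolding bb_middle_integral_def by (rule brownian_bridge_integral_measurable[OF bb]) auto
  then show ?thesis
    unfolding bb_Z_def[abs_def] using bb_integral_measurable[OF bb] brownian_bridge_measurable[OF bb]
    by measurable
qed

lemma distr_bb_Z:
  assumes bb: "brownian_bridge M \<beta>"
  shows "distr M borel (bb_Z \<beta>) = density lborel (normal_density 0 (sqrt (13/162)))"
  using brownian_bridge_char_joint[OF bb, of "{}" _ 0]
  by (intro distr_normal_if_char[OF brownian_bridge_prob_space[OF bb] bb_Z_measurable[OF bb]])
    (simp_all add: power2_eq_square)

lemma normal_density_tilt:
  fixes z c :: real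
  shows "normal_density 0 (sqrt (13/162)) z * (sqrt 27 * exp (- 162 * (z - c)^2 + 6 * c^2)) =
         normal_density (26 * c / 27) (sqrt (13/4374)) z"
proof -
  have sq1: "(sqrt (13/162::real))\<^sup>2 = 13/162" by (rule real_sqrt_pow2) simp
  have sq2: "(sqrt (13/4374::real))\<^sup>2 = 13/4374" by (rule real_sqrt_pow2) simp
  have coef: "1 / sqrt (2 * pi * (sqrt (13/162))\<^sup>2) * sqrt 27 = 1 / sqrt (2 * pi * (sqrt (13/4374))\<^sup>2)"
  proof -
    have "1 / sqrt (2 * pi * (13/162)) * sqrt 27 = sqrt 27 / sqrt (2 * pi * (13/162))" by simp
    also have "\<dots> = sqrt (27 / (2 * pi * (13/162)))" by (rule real_sqrt_divide[symmetric])
    also have "27 / (2 * pi * (13/162)) = 1 / (2 * pi * (13/4374))" by (simp add: field_simps)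
    also have "sqrt (1 / (2 * pi * (13/4374))) = 1 / sqrt (2 * pi * (13/4374))"
      by (simp only: real_sqrt_divide real_sqrt_one)
    finally show ?thesis unfolding sq1 sq2 .
  qed
  have ex: "- (z - 0)\<^sup>2 / (2 * (sqrt (13/162))\<^sup>2) + (- 162 * (z - c)^2 + 6 * c^2) = - (z - 26 * c / 27)\<^sup>2 / (2 * (sqrt (13/4374))\<^sup>2)"
    by (simp add: power2_eq_square field_simps)
  have "normal_density 0 (sqrt (13/162)) z * (sqrt 27 * exp (- 162 * (z - c)^2 + 6 * c^2)) =
      (1 / sqrt (2 * pi * (sqrt (13/162))\<^sup>2) * sqrt 27) * exp (- (z - 0)\<^sup>2 / (2 * (sqrt (13/162))\<^sup>2) + (- 162 * (z - c)^2 + 6 * c^2))"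
    unfolding normal_density_def exp_add by (simp add: mult_ac)
  also have "\<dots> = normal_density (26 * c / 27) (sqrt (13/4374)) z"
    unfolding coef ex normal_density_def ..
  finally show ?thesis .
qed

lemma integral_rho_iexp_bb_Z:
  assumes bb: "brownian_bridge M \<beta>"
  shows "(CLINT \<omega>|M. complex_of_real (sqrt 27 * exp (- 162 * (bb_Z \<beta> \<omega> - c)^2 + 6 * c^2)) * iexp (l * bb_Z \<beta> \<omega>)) =
     iexp (l * (26 * c / 27)) * complex_of_real (exp (- ((l * sqrt (13/4374))\<^sup>2) / 2))"
proof -
  define F where "F = (\<lambda>z::real. sqrt 27 * exp (- 162 * (z - c)^2 + 6 * c^2))"
  have Fm: "F \<in> borel_measurable borel" unfolding F_def by measurable
  have hm: "(\<lambda>z. complex_of_real (F z) * iexp (l * z)) \<in> borel_measurable borel"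
    using Fm by measurable
  have "(CLINT \<omega>|M. complex_of_real (F (bb_Z \<beta> \<omega>)) * iexp (l * bb_Z \<beta> \<omega>)) =
      (CLINT z|distr M borel (bb_Z \<beta>). complex_of_real (F z) * iexp (l * z))"
    by (rule integral_distr[OF bb_Z_measurable[OF bb] hm, symmetric])
  also have "\<dots> = (CLINT z|density lborel (normal_density 0 (sqrt (13/162))). complex_of_real (F z) * iexp (l * z))"
    by (simp add: distr_bb_Z[OF bb])
  also have "\<dots> = (CLINT z|lborel. normal_density 0 (sqrt (13/162)) z *\<^sub>R (complex_of_real (F z) * iexp (l * z)))"
    by (rule integral_density) (use hm in auto)
  also have "\<dots> = (CLINT z|lborel. normal_density (26 * c / 27) (sqrt (13/4374)) z *\<^sub>R iexp (l * z))"
  proof (rule Bochner_Integration.integral_cong[OF refl])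
    fix z :: real
    have "normal_density 0 (sqrt (13/162)) z *\<^sub>R (complex_of_real (F z) * iexp (l * z)) =
        complex_of_real (normal_density 0 (sqrt (13/162)) z * F z) * iexp (l * z)"
      by (simp add: scaleR_conv_of_real)
    also have "\<dots> = normal_density (26 * c / 27) (sqrt (13/4374)) z *\<^sub>R iexp (l * z)"
      unfolding F_def normal_density_tilt by (simp add: scaleR_conv_of_real)
    finally show "normal_density 0 (sqrt (13/162)) z *\<^sub>R (complex_of_real (F z) * iexp (l * z)) =
        normal_density (26 * c / 27) (sqrt (13/4374)) z *\<^sub>R iexp (l * z)" .
  qed
  also have "\<dots> = (CLINT z|density lborel (normal_density (26 * c / 27) (sqrt (13/4374))). iexp (l * z))"
    by (rule integral_density[symmetric]) auto
  also have "\<dots> = iexp (l * (26 * c / 27)) * complex_of_real (exp (- ((l * sqrt (13/4374))\<^sup>2) / 2))"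
    by (rule char_normal_density) simp
  finally show ?thesis by (simp add: F_def)
qed

lemma integral_mult_uncorrelated_bb_Z:
  fixes f g :: "real \<Rightarrow> complex" and \<beta> :: "real \<Rightarrow> 'a \<Rightarrow> real"
  assumes bb: "brownian_bridge M \<beta>" and J: "finite J" "J \<subseteq> {0..1}"
    and uncorrelated: "(\<Sum>t\<in>J. a t * cov_Z t) + x * (13/162) + z * (13/162) = 0"
    and f: "f \<in> borel_measurable borel" "\<And>y. norm (f y) \<le> B"
    and g: "g \<in> borel_measurable borel" "\<And>y. norm (g y) \<le> B'"
  defines "R \<equiv> \<lambda>\<omega>. (\<Sum>t\<in>J. a t * \<beta> t \<omega>) + x * bb_integral \<beta> \<omega> + z * bb_Z \<beta> \<omega>"
  shows "(CLINT \<omega>|M. f (bb_Z \<beta> \<omega>) * g (R \<omega>)) = (CLINT \<omega>|M. f (bb_Z \<beta> \<omega>)) * (CLINT \<omega>|M. g (R \<omega>))"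
proof (rule integral_mult_if_char_factorizes[OF brownian_bridge_prob_space[OF bb] bb_Z_measurable[OF bb] _ _ f g])
  show R_meas: "R \<in> borel_measurable M"
    unfolding R_def using J bb_integral_measurable[OF bb] bb_Z_measurable[OF bb] brownian_bridge_measurable[OF bb]
    by (intro borel_measurable_add borel_measurable_sum borel_measurable_times borel_measurable_const) auto
  define p where "p = (\<Sum>s\<in>J. \<Sum>t\<in>J. a s * a t * bb_cov s t)"
  define q where "q = (\<Sum>t\<in>J. a t * bb_cov_int 0 1 t)"
  define r where "r = (\<Sum>t\<in>J. a t * cov_Z t)"
  have char: "(CLINT \<omega>|M. iexp (s * bb_Z \<beta> \<omega> + u * R \<omega>)) =
      complex_of_real (exp (- (u^2 * p + 2 * (u * x) * (u * q) + 2 * (u * z + s) * (u * r)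
        + (u * x)^2 / 12 + 2 * (u * x) * (u * z + s) * (13/162) + (u * z + s)^2 * (13/162)) / 2))" for s u
  proof -
    have "s * bb_Z \<beta> \<omega> + u * R \<omega> =
        (\<Sum>t\<in>J. (u * a t) * \<beta> t \<omega>) + (u * x) * bb_integral \<beta> \<omega> + (u * z + s) * bb_Z \<beta> \<omega>" for \<omega>
      by (simp add: R_def sum_distrib_left algebra_simps)
    moreover have "(\<Sum>s\<in>J. \<Sum>t\<in>J. (u * a s) * (u * a t) * bb_cov s t) = u^2 * p"
      "(\<Sum>t\<in>J. (u * a t) * bb_cov_int 0 1 t) = u * q" "(\<Sum>t\<in>J. (u * a t) * cov_Z t) = u * r"
      by (simp_all add: p_def q_def r_def sum_distrib_left mult_ac power2_eq_square)
    ultimately show ?thesis by (simp only: brownian_bridge_char_joint[OF bb J])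
  qed
  fix s u
  have r_eq: "r = - x * (13/162) - z * (13/162)" using uncorrelated unfolding r_def by linarith
  have "complex_of_real (exp (- (u^2 * p + 2 * (u * x) * (u * q) + 2 * (u * z + s) * (u * r)
        + (u * x)^2 / 12 + 2 * (u * x) * (u * z + s) * (13/162) + (u * z + s)^2 * (13/162)) / 2)) =
      complex_of_real (exp (- (0^2 * p + 2 * (0 * x) * (0 * q) + 2 * (0 * z + s) * (0 * r)
        + (0 * x)^2 / 12 + 2 * (0 * x) * (0 * z + s) * (13/162) + (0 * z + s)^2 * (13/162)) / 2)) *
      complex_of_real (exp (- (u^2 * p + 2 * (u * x) * (u * q) + 2 * (u * z + 0) * (u * r)
        + (u * x)^2 / 12 + 2 * (u * x) * (u * z + 0) * (13/162) + (u * z + 0)^2 * (13/162)) / 2))"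
    unfolding of_real_mult[symmetric] exp_add[symmetric]
    by (rule arg_cong[where f="\<lambda>v. complex_of_real (exp v)"]) (simp add: r_eq field_simps power2_eq_square)
  then show "(CLINT \<omega>|M. iexp (s * bb_Z \<beta> \<omega> + u * R \<omega>)) =
      (CLINT \<omega>|M. iexp (s * bb_Z \<beta> \<omega>)) * (CLINT \<omega>|M. iexp (u * R \<omega>))"
    using char[of s u] char[of s 0] char[of 0 u] by simp
qed

lemma char_beta_c_bb_path:
  fixes a :: "real \<Rightarrow> real"
  assumes bb: "brownian_bridge M \<beta>" and J: "finite J" "J \<subseteq> {0..1}"
  defines "p \<equiv> \<Sum>s\<in>J. \<Sum>t\<in>J. a s * a t * bb_cov s t" and "q \<equiv> \<Sum>t\<in>J. a t * bb_cov_int 0 1 t"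
  shows "(CLINT \<omega>|M. iexp (\<Sum>t\<in>J. a t * beta_c c (bb_path \<beta> \<omega>) t)) =
    iexp (12 * q * c) * complex_of_real (exp (- (p - 12 * q^2) / 2))"
proof -
  have six: "(\<Sum>t\<in>J. a t * (6 * t * (1 - t))) = 12 * q"
    unfolding q_def sum_distrib_left using J(2) by (intro sum.cong) (auto simp: bb_cov_int_01)
  have "(\<Sum>t\<in>J. a t * beta_c c (bb_path \<beta> \<omega>) t) =
      12 * q * c + ((\<Sum>t\<in>J. a t * \<beta> t \<omega>) + (- 12 * q) * bb_integral \<beta> \<omega> + 0 * bb_Z \<beta> \<omega>)" for \<omega>
  proof -
    have "(\<Sum>t\<in>J. a t * beta_c c (bb_path \<beta> \<omega>) t) =
        (\<Sum>t\<in>J. a t * \<beta> t \<omega> + a t * (6 * t * (1 - t)) * (c - bb_integral \<beta> \<omega>))"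
      using J(2) by (intro sum.cong) (auto simp: beta_c_bb_path algebra_simps)
    then show ?thesis by (simp add: sum.distrib six flip: sum_distrib_right) (simp add: algebra_simps)
  qed
  then have "(CLINT \<omega>|M. iexp (\<Sum>t\<in>J. a t * beta_c c (bb_path \<beta> \<omega>) t)) =
      iexp (12 * q * c) * (CLINT \<omega>|M. iexp ((\<Sum>t\<in>J. a t * \<beta> t \<omega>) + (- 12 * q) * bb_integral \<beta> \<omega> + 0 * bb_Z \<beta> \<omega>))"
    by (simp only: of_real_add distrib_left exp_add integral_mult_right_zero)
  also have "\<dots> = iexp (12 * q * c) * complex_of_real (exp (- (p - 12 * q^2) / 2))"
    unfolding brownian_bridge_char_joint[OF bb J] p_def[symmetric] q_def[symmetric]
    by (simp add: power2_eq_square)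
  finally show ?thesis .
qed

lemma char_Gamma_c_rho1:
  fixes a :: "real \<Rightarrow> real"
  assumes bb: "brownian_bridge M \<beta>" and J: "finite J" "J \<subseteq> {0..1}"
  defines "p \<equiv> \<Sum>s\<in>J. \<Sum>t\<in>J. a s * a t * bb_cov s t" and "q \<equiv> \<Sum>t\<in>J. a t * bb_cov_int 0 1 t"
    and "r \<equiv> \<Sum>t\<in>J. a t * cov_Z t" and "\<kappa> \<equiv> \<Sum>t\<in>J. a t * Gamma_profile t"
    and "l \<equiv> 162 * (\<Sum>t\<in>J. a t * cov_Z t) / 13 - (\<Sum>t\<in>J. a t * Gamma_profile t)"
  shows "(CLINT \<omega>|M. rho1 c (Gamma_c c (bb_path \<beta> \<omega>)) *\<^sub>R iexp (\<Sum>t\<in>J. a t * Gamma_c c (bb_path \<beta> \<omega>) t)) =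
    iexp (\<kappa> * c + l * (26 * c / 27)) * complex_of_real (exp (- (l^2 * (13/4374) + (p + 2 * (- \<kappa>) * q
      + 2 * (- l) * r + (- \<kappa>)^2 / 12 + 2 * (- \<kappa>) * (- l) * (13/162) + (- l)^2 * (13/162))) / 2))"
proof -
  \<comment> \<open>\<open>l\<close> makes \<open>R\<close> below uncorrelated with \<open>bb_Z\<close>, so the weight, a function of \<open>bb_Z\<close>, splits off.\<close>
  let ?Q = "p + 2 * (- \<kappa>) * q + 2 * (- l) * r + (- \<kappa>)^2 / 12 + 2 * (- \<kappa>) * (- l) * (13/162) + (- l)^2 * (13/162)"
  define F where "F z = sqrt 27 * exp (- 162 * (z - c)^2 + 6 * c^2)" for z
  define R where "R \<omega> = (\<Sum>t\<in>J. a t * \<beta> t \<omega>) + (- \<kappa>) * bb_integral \<beta> \<omega> + (- l) * bb_Z \<beta> \<omega>" for \<omega>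
  have pointwise: "rho1 c (Gamma_c c (bb_path \<beta> \<omega>)) *\<^sub>R iexp (\<Sum>t\<in>J. a t * Gamma_c c (bb_path \<beta> \<omega>) t) =
      iexp (\<kappa> * c) * ((complex_of_real (F (bb_Z \<beta> \<omega>)) * iexp (l * bb_Z \<beta> \<omega>)) * iexp (R \<omega>))"
    if \<omega>: "\<omega> \<in> space M" for \<omega>
  proof -
    have "(\<Sum>t\<in>J. a t * Gamma_c c (bb_path \<beta> \<omega>) t) =
        (\<Sum>t\<in>J. a t * \<beta> t \<omega> + a t * Gamma_profile t * (c - bb_integral \<beta> \<omega>))"
      using J(2) by (intro sum.cong) (auto simp: Gamma_c_bb_path algebra_simps)
    then have "(\<Sum>t\<in>J. a t * Gamma_c c (bb_path \<beta> \<omega>) t) = \<kappa> * c + (l * bb_Z \<beta> \<omega> + R \<omega>)"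
      by (simp add: sum.distrib R_def \<kappa>_def flip: sum_distrib_right) (simp add: algebra_simps)
    then show ?thesis
      unfolding rho1_Gamma_c_eq[OF bb \<omega>] F_def[symmetric]
      by (simp add: scaleR_conv_of_real exp_add distrib_left mult_ac)
  qed
  have "(CLINT \<omega>|M. rho1 c (Gamma_c c (bb_path \<beta> \<omega>)) *\<^sub>R iexp (\<Sum>t\<in>J. a t * Gamma_c c (bb_path \<beta> \<omega>) t)) =
      iexp (\<kappa> * c) * (CLINT \<omega>|M. (complex_of_real (F (bb_Z \<beta> \<omega>)) * iexp (l * bb_Z \<beta> \<omega>)) * iexp (R \<omega>))"
    unfolding integral_mult_right_zero[symmetric] by (rule Bochner_Integration.integral_cong[OF refl pointwise])
  also have "(CLINT \<omega>|M. (complex_of_real (F (bb_Z \<beta> \<omega>)) * iexp (l * bb_Z \<beta> \<omega>)) * iexp (R \<omega>)) =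
      (CLINT \<omega>|M. complex_of_real (F (bb_Z \<beta> \<omega>)) * iexp (l * bb_Z \<beta> \<omega>)) * (CLINT \<omega>|M. iexp (R \<omega>))"
  proof (unfold R_def, rule integral_mult_uncorrelated_bb_Z[OF bb J, where B="sqrt 27 * exp (6 * c^2)" and B'=1])
    show "(\<Sum>t\<in>J. a t * cov_Z t) + - \<kappa> * (13/162) + - l * (13/162) = 0"
      by (simp add: l_def \<kappa>_def field_simps)
    show "norm (complex_of_real (F z) * iexp (l * z)) \<le> sqrt 27 * exp (6 * c^2)" for z
      by (simp add: F_def norm_mult)
    show "(\<lambda>z. complex_of_real (F z) * iexp (l * z)) \<in> borel_measurable borel" unfolding F_def by measurable
    show "(\<lambda>z. iexp z) \<in> borel_measurable borel" by measurable
  qed simp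
  also have "(CLINT \<omega>|M. complex_of_real (F (bb_Z \<beta> \<omega>)) * iexp (l * bb_Z \<beta> \<omega>)) =
      iexp (l * (26 * c / 27)) * complex_of_real (exp (- ((l * sqrt (13/4374))\<^sup>2) / 2))"
    unfolding F_def by (rule integral_rho_iexp_bb_Z[OF bb])
  also have "(CLINT \<omega>|M. iexp (R \<omega>)) = complex_of_real (exp (- ?Q / 2))"
    unfolding R_def brownian_bridge_char_joint[OF bb J] p_def q_def r_def ..
  finally have "(CLINT \<omega>|M. rho1 c (Gamma_c c (bb_path \<beta> \<omega>)) *\<^sub>R iexp (\<Sum>t\<in>J. a t * Gamma_c c (bb_path \<beta> \<omega>) t)) =
      iexp (\<kappa> * c) * ((iexp (l * (26 * c / 27)) * complex_of_real (exp (- ((l * sqrt (13/4374))\<^sup>2) / 2)))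
        * complex_of_real (exp (- ?Q / 2)))" .
  moreover have "iexp (\<kappa> * c + l * (26 * c / 27)) = iexp (\<kappa> * c) * iexp (l * (26 * c / 27))"
    by (simp add: distrib_left exp_add)
  moreover have "exp (- (l^2 * (13/4374) + Q) / 2) = exp (- ((l * sqrt (13/4374))\<^sup>2) / 2) * exp (- Q / 2)" for Q
    by (simp add: exp_add[symmetric] power_mult_distrib add_divide_distrib)
  ultimately show ?thesis
    by (simp only: of_real_mult mult.assoc)
qed

lemma char_beta_c_eq_char_Gamma_c_rho1:
  assumes bb: "brownian_bridge M \<beta>" and J: "finite J" "J \<subseteq> {0..1}"
  shows "(CLINT \<omega>|M. iexp (\<Sum>t\<in>J. a t * beta_c c (bb_path \<beta> \<omega>) t)) =
    (CLINT \<omega>|M. rho1 c (Gamma_c c (bb_path \<beta> \<omega>)) *\<^sub>R iexp (\<Sum>t\<in>J. a t * Gamma_c c (bb_path \<beta> \<omega>) t))"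
proof -
  define p where "p = (\<Sum>s\<in>J. \<Sum>t\<in>J. a s * a t * bb_cov s t)"
  define q where "q = (\<Sum>t\<in>J. a t * bb_cov_int 0 1 t)"
  define r where "r = (\<Sum>t\<in>J. a t * cov_Z t)"
  define \<kappa> where "\<kappa> = (\<Sum>t\<in>J. a t * Gamma_profile t)"
  define l where "l = 162 * r / 13 - \<kappa>"
  have "r = (\<Sum>t\<in>J. a t * bb_cov_int 0 1 t - a t * Gamma_profile t / 324)"
    unfolding r_def using J(2) by (intro sum.cong) (auto simp: cov_Z_eq bb_cov_int_01 right_diff_distrib)
  then have r_eq: "r = q - \<kappa> / 324"
    by (simp add: q_def \<kappa>_def sum_subtractf sum_divide_distrib)
  have phase: "12 * q * c = \<kappa> * c + l * (26 * c / 27)"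
    by (simp add: l_def r_eq field_simps)
  have modulus: "p - 12 * q^2 = l^2 * (13/4374) + (p + 2 * (- \<kappa>) * q + 2 * (- l) * r + (- \<kappa>)^2 / 12
      + 2 * (- \<kappa>) * (- l) * (13/162) + (- l)^2 * (13/162))"
    by (simp add: l_def r_eq field_simps power2_eq_square)
  show ?thesis
    using char_beta_c_bb_path[OF bb J, of a c] char_Gamma_c_rho1[OF bb J, of c a]
    unfolding p_def[symmetric] q_def[symmetric] r_def[symmetric] \<kappa>_def[symmetric] l_def[symmetric] phase modulus
    by simp
qed

lemma integral_beta_c_eq_Gamma_c_rho1:
  fixes \<Phi> :: "(real \<Rightarrow> real) \<Rightarrow> real"
  assumes bb: "brownian_bridge M \<beta>" and \<Phi>: "\<Phi> \<in> borel_measurable path_space" "\<And>x. \<bar>\<Phi> x\<bar> \<le> B"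
  shows "(\<integral>\<omega>. \<Phi> (beta_c c (bb_path \<beta> \<omega>)) \<partial>M) =
    (\<integral>\<omega>. \<Phi> (Gamma_c c (bb_path \<beta> \<omega>)) * rho1 c (Gamma_c c (bb_path \<beta> \<omega>)) \<partial>M)"
proof -
  interpret prob_space M by (rule brownian_bridge_prob_space[OF bb])
  define \<rho> where "\<rho> \<omega> = rho1 c (Gamma_c c (bb_path \<beta> \<omega>))" for \<omega>
  define D where "D = density M \<rho>"
  have S: "bb_integral \<beta> \<in> borel_measurable M" by (rule bb_integral_measurable[OF bb])
  have \<rho>_meas: "\<rho> \<in> borel_measurable M"
  proof -
    have "(\<lambda>\<omega>. sqrt 27 * exp (- 162 * (bb_Z \<beta> \<omega> - c)^2 + 6 * c^2)) \<in> borel_measurable M"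
      using bb_Z_measurable[OF bb] by measurable
    then show ?thesis by (simp add: \<rho>_def rho1_Gamma_c_eq[OF bb] cong: measurable_cong)
  qed
  have \<rho>_bounds: "0 \<le> \<rho> \<omega> \<and> \<rho> \<omega> \<le> sqrt 27 * exp (6 * c^2)" for \<omega>
    by (simp add: \<rho>_def rho1_def)
  have beta_c_meas: "(\<lambda>\<omega>. beta_c c (bb_path \<beta> \<omega>)) \<in> measurable M path_space"
    unfolding beta_c_bb_path using S brownian_bridge_measurable[OF bb] by (intro measurable_restrict) auto
  have Gamma_c_meas_M: "(\<lambda>\<omega>. Gamma_c c (bb_path \<beta> \<omega>)) \<in> measurable M path_space"
    unfolding Gamma_c_bb_path using S brownian_bridge_measurable[OF bb] by (intro measurable_restrict) auto
  then have Gamma_c_meas: "(\<lambda>\<omega>. Gamma_c c (bb_path \<beta> \<omega>)) \<in> measurable D path_space"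
    by (rule measurable_transfer[rotated]) (simp add: D_def)
  have law: "distr M path_space (\<lambda>\<omega>. beta_c c (bb_path \<beta> \<omega>)) = distr D path_space (\<lambda>\<omega>. Gamma_c c (bb_path \<beta> \<omega>))"
  proof (rule distr_PiM_eqI_char[OF finite_measure_axioms _ beta_c_meas Gamma_c_meas])
    show "finite_measure D"
      unfolding D_def by (rule finite_measure_density_bounded[OF finite_measure_axioms \<rho>_meas \<rho>_bounds])
    fix J :: "real set" and a :: "real \<Rightarrow> real"
    assume J: "finite J" "J \<subseteq> {0..1}"
    have "(\<lambda>y. iexp (\<Sum>t\<in>J. a t * y t)) \<in> borel_measurable path_space"
      by measurable (use J in auto)
    then have "(\<lambda>\<omega>. iexp (\<Sum>t\<in>J. a t * Gamma_c c (bb_path \<beta> \<omega>) t)) \<in> borel_measurable M"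
      by (rule measurable_compose[OF Gamma_c_meas_M])
    then have density: "(CLINT \<omega>|D. iexp (\<Sum>t\<in>J. a t * Gamma_c c (bb_path \<beta> \<omega>) t)) =
        (CLINT \<omega>|M. \<rho> \<omega> *\<^sub>R iexp (\<Sum>t\<in>J. a t * Gamma_c c (bb_path \<beta> \<omega>) t))"
      unfolding D_def using \<rho>_meas \<rho>_bounds by (intro integral_density) auto
    show "(CLINT \<omega>|M. iexp (\<Sum>t\<in>J. a t * beta_c c (bb_path \<beta> \<omega>) t)) =
        (CLINT \<omega>|D. iexp (\<Sum>t\<in>J. a t * Gamma_c c (bb_path \<beta> \<omega>) t))"
      unfolding density \<rho>_def by (rule char_beta_c_eq_char_Gamma_c_rho1[OF bb J])
  qed
  have "(\<integral>\<omega>. \<Phi> (beta_c c (bb_path \<beta> \<omega>)) \<partial>M) = (\<integral>x. \<Phi> x \<partial>distr D path_space (\<lambda>\<omega>. Gamma_c c (bb_path \<beta> \<omega>)))"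
    by (simp add: law[symmetric] integral_distr[OF beta_c_meas \<Phi>(1)])
  also have "\<dots> = (\<integral>\<omega>. \<rho> \<omega> * \<Phi> (Gamma_c c (bb_path \<beta> \<omega>)) \<partial>M)"
    unfolding integral_distr[OF Gamma_c_meas \<Phi>(1)] unfolding D_def
    using measurable_compose[OF Gamma_c_meas_M \<Phi>(1)] \<rho>_meas \<rho>_bounds
    by (subst integral_density) auto
  finally show ?thesis by (simp add: \<rho>_def mult.commute)
qed

theorem lemma4p4:
  fixes M :: "'a measure" and \<beta> :: "real \<Rightarrow> 'a \<Rightarrow> real" and c :: real
    and \<Phi> :: "(real \<Rightarrow> real) \<Rightarrow> real"
  assumes bb: "brownian_bridge M \<beta>"
    and \<Phi>_meas: "\<Phi> \<in> borel_measurable path_space"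
    and \<Phi>_bdd: "\<exists>B. \<forall>x. \<bar>\<Phi> x\<bar> \<le> B"
  shows "(\<forall>A\<in>sets borel.
            (\<integral>\<omega>. \<Phi> (bb_path \<beta> \<omega>) * indicator A (integral {0..1} (bb_path \<beta> \<omega>)) \<partial>M) =
            (\<integral>c'. indicator A c' * (\<integral>\<omega>. \<Phi> (beta_c c' (bb_path \<beta> \<omega>)) \<partial>M)
               \<partial>density lborel (normal_density 0 (sqrt (1/12)))))
       \<and> (\<integral>\<omega>. \<Phi> (beta_c c (bb_path \<beta> \<omega>)) \<partial>M) =
         (\<integral>\<omega>. \<Phi> (Gamma_c c (bb_path \<beta> \<omega>)) * rho1 c (Gamma_c c (bb_path \<beta> \<omega>)) \<partial>M)"
proof -
  obtain B where B: "\<And>x. \<bar>\<Phi> x\<bar> \<le> B" using \<Phi>_bdd by blast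
  show ?thesis
    using conditional_law_bb_integral[OF bb \<Phi>_meas B] integral_beta_c_eq_Gamma_c_rho1[OF bb \<Phi>_meas B]
    by blast
qed

end
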